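(* For every rational $\alpha\in(0,\tfrac12)$ and every $\ell\in\mathbb N$ with $\alpha\ell\in\mathbb N$ there is a constant $c_\ell$ (depending only on $\ell$) such that for all sufficiently large $n$ the following holds. Let $J=J_{n,\ell,\alpha}$, let $\pi$ be the uniform distribution on $V(J)$ and $L=I-A$ its normalized Laplacian. For every integer $0\le r\le\ell/2$, there is a degree-2 sum-of-squares proof, in the formal variables $(F(X))_{X\in V(J)}$ and from the axioms $\{0\le F(X)\le1\}_{X\in V(J)}$, of $$\langle F,LF\rangle_\pi\ \ge\ \big(1-(1-\alpha)^{r+1}\big)\Big[\big(1-\tfrac{c_\ell}{n}\big)\mathbb{E}_\pi[F]-8^r\binom{\ell}{r}\sum_{j=0}^r\mathbb{E}_{Y\in\binom{[n]}{j}}\big[\delta_Y(F)^2\big]+\mathbb{E}_\pi[F^2-F]\Big].$$ In particular this inequality holds for every $F:V(J)\to[0,1]$.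
   Context: For $0<\alpha<1$ and $\ell,n\in\mathbb N$ with $\alpha\ell\in\mathbb N$ and $n>\ell$, the Johnson graph $J_{n,\ell,\alpha}$ has vertex set $\binom{[n]}{\ell}$ with $U\sim V$ iff $|U\cap V|=(1-\alpha)\ell$. $A$ is its random-walk transition matrix and $\langle f,g\rangle_\pi=\mathbb{E}_{X\sim\pi}f(X)g(X)$. For $Y\subseteq[n]$ with $|Y|=j\le\ell-1$, $\delta_Y(F)$ is the average of $F$ over the vertices of $J$ containing $Y$, i.e. $\delta_Y(F)=\mathbb{E}_{X\in\binom{[n]\setminus Y}{\ell-j}}F(Y\cup X)$; for $Y=\emptyset$, $\delta_\emptyset(F)=\mathbb{E}_\pi[F]$. A degree-$d$ SoS proof of $g\ge h$ from axioms $\{a_i\ge0\}$ means $g-h=s_0+\sum_i s_i a_i$ with $s_0,s_i$ sums of squares and all terms of degree $\le d$. *)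

theory Defs
  imports Complex_Main
begin

definition johnson_vertices :: "nat \<Rightarrow> nat \<Rightarrow> nat set set" where
  "johnson_vertices n l = {U. U \<subseteq> {..<n} \<and> card U = l}"

definition johnson_adj :: "nat \<Rightarrow> nat \<Rightarrow> real \<Rightarrow> nat set \<Rightarrow> nat set \<Rightarrow> bool" where
  "johnson_adj n l \<alpha> U V \<longleftrightarrow> U \<in> johnson_vertices n l \<and> V \<in> johnson_vertices n l
      \<and> real (card (U \<inter> V)) = (1 - \<alpha>) * real l"

definition johnson_walk :: "nat \<Rightarrow> nat \<Rightarrow> real \<Rightarrow> (nat set \<Rightarrow> real) \<Rightarrow> nat set \<Rightarrow> real" where
  "johnson_walk n l \<alpha> f U =
     (\<Sum>V\<in>{V. johnson_adj n l \<alpha> U V}. f V) / real (card {V. johnson_adj n l \<alpha> U V})"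

definition johnson_laplacian :: "nat \<Rightarrow> nat \<Rightarrow> real \<Rightarrow> (nat set \<Rightarrow> real) \<Rightarrow> nat set \<Rightarrow> real" where
  "johnson_laplacian n l \<alpha> f U = f U - johnson_walk n l \<alpha> f U"

definition pi_expect :: "nat \<Rightarrow> nat \<Rightarrow> (nat set \<Rightarrow> real) \<Rightarrow> real" where
  "pi_expect n l f = (\<Sum>U\<in>johnson_vertices n l. f U) / real (card (johnson_vertices n l))"

definition pi_inner :: "nat \<Rightarrow> nat \<Rightarrow> (nat set \<Rightarrow> real) \<Rightarrow> (nat set \<Rightarrow> real) \<Rightarrow> real" where
  "pi_inner n l f g = pi_expect n l (\<lambda>U. f U * g U)"

definition johnson_delta :: "nat \<Rightarrow> nat \<Rightarrow> nat set \<Rightarrow> (nat set \<Rightarrow> real) \<Rightarrow> real" where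
  "johnson_delta n l Y F =
     (\<Sum>X\<in>{X. X \<subseteq> {..<n} - Y \<and> card X = l - card Y}. F (Y \<union> X))
       / real (card {X. X \<subseteq> {..<n} - Y \<and> card X = l - card Y})"

definition subset_avg :: "nat \<Rightarrow> nat \<Rightarrow> (nat set \<Rightarrow> real) \<Rightarrow> real" where
  "subset_avg n j g =
     (\<Sum>Y\<in>{Y. Y \<subseteq> {..<n} \<and> card Y = j}. g Y) / real (card {Y. Y \<subseteq> {..<n} \<and> card Y = j})"

definition affine_form :: "'v set \<Rightarrow> real \<Rightarrow> ('v \<Rightarrow> real) \<Rightarrow> ('v \<Rightarrow> real) \<Rightarrow> real" where
  "affine_form V c b F = c + (\<Sum>X\<in>V. b X * F X)"

text \<open>Degree-2 SoS proof of g >= h from the axioms {F X >= 0, 1 - F X >= 0}_{X in V}: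
  g - h = s0 + sum_X (s_X * F X + t_X * (1 - F X)), where s0 is a sum of squares of
  polynomials of degree <= 1 and, since each term s_i a_i must have degree <= 2 with a_i of
  degree 1, the SoS multipliers s_X, t_X are (sums of) squares of constants.
  The identity is a polynomial identity, expressed as an identity of functions of F.\<close>
definition sos_deg2_proof :: "'v set \<Rightarrow> (('v \<Rightarrow> real) \<Rightarrow> real) \<Rightarrow> (('v \<Rightarrow> real) \<Rightarrow> real) \<Rightarrow> bool" where
  "sos_deg2_proof V g h \<longleftrightarrow>
     (\<exists>(qs :: (real \<times> ('v \<Rightarrow> real)) list) (s :: 'v \<Rightarrow> real) (t :: 'v \<Rightarrow> real).
        \<forall>F. g F - h F =
              (\<Sum>(c, b)\<leftarrow>qs. (affine_form V c b F)\<^sup>2)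
              + (\<Sum>X\<in>V. (s X)\<^sup>2 * F X + (t X)\<^sup>2 * (1 - F X)))"

end

theory Submission
  imports Defs "HOL-Computational_Algebra.Polynomial"
begin

text \<open>
  Let U and D be the up and down operators between consecutive layers of subsets of [n], and
  T = U D on the l-sets. The commutation relation D U = U D + (n - 2j) I gives
  U^s D^s = (T - theta_l) ... (T - theta_(l-s+1)) with theta_i = (l - i)(n - l - i + 1), so T is a
  self-adjoint operator annihilated by the product of the T - theta_i over i \<le> l, and these
  eigenvalues are distinct once n \<ge> 2l. Since U^s D^s has kernel (s!)^2 binomial(|S \<inter> V|, l - s),
  binomial inversion writes the walk A as a polynomial in T, and the sums of delta_Y(F)^2 over the
  j-sets Y are multiples of <F, U^(l-j) D^(l-j) F>. So the difference of the two sides of the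
  inequality is <F, R(T) F> for a polynomial R, and Lagrange interpolation at the theta_i turns it
  into the sum of R(theta_i) |L_i(T) F|^2: a sum of squares of linear forms as soon as every
  R(theta_i) \<ge> 0. As n grows, R(theta_i) converges to a limit expressed by falling factorials,
  which is positive for i \<ge> 1 except when r = 0 and i = 1. That case and i = 0 are settled by
  exact computation, the former through the eigenvectors S \<mapsto> [x \<in> S] - l/n of T. The constant
  c_l = 0 suffices.
\<close>

section \<open>Polynomials in a linear operator\<close>

type_synonym 'a real_op = "('a \<Rightarrow> real) \<Rightarrow> 'a \<Rightarrow> real"

fun poly_op_coeffs :: "'a real_op \<Rightarrow> real list \<Rightarrow> 'a real_op" where
  "poly_op_coeffs T [] F = (\<lambda>S. 0)"
| "poly_op_coeffs T (a # as) F = (\<lambda>S. a * F S + T (poly_op_coeffs T as F) S)"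

definition poly_op :: "'a real_op \<Rightarrow> real poly \<Rightarrow> 'a real_op" where
  "poly_op T p F = poly_op_coeffs T (coeffs p) F"

definition linear_op :: "'a real_op \<Rightarrow> bool" where
  "linear_op T \<longleftrightarrow> (\<forall>a F G. T (\<lambda>S. a * F S + G S) = (\<lambda>S. a * T F S + T G S))"

lemma linear_opD: "linear_op T \<Longrightarrow> T (\<lambda>S. a * F S + G S) = (\<lambda>S. a * T F S + T G S)"
  by (simp add: linear_op_def)

lemma linear_op_zero: assumes "linear_op T" shows "T (\<lambda>S. 0) = (\<lambda>S. 0)"
proof -
  have "T (\<lambda>S. (-1) * 0 + 0) = (\<lambda>S. (-1) * T (\<lambda>S. 0) S + T (\<lambda>S. 0) S)"
    using linear_opD[OF assms, of "-1" "\<lambda>S. 0" "\<lambda>S. 0"] by simp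
  then show ?thesis by simp
qed

lemma linear_op_add: assumes "linear_op T" shows "T (\<lambda>S. F S + G S) = (\<lambda>S. T F S + T G S)"
  using assms unfolding linear_op_def by (metis (no_types, lifting) ext mult_1)

lemma linear_op_smult: assumes "linear_op T" shows "T (\<lambda>S. a * F S) = (\<lambda>S. a * T F S)"
proof -
  have "T (\<lambda>S. a * F S + 0) = (\<lambda>S. a * T F S + T (\<lambda>S. 0) S)"
    using linear_opD[OF assms, of a F "\<lambda>S. 0"] by simp
  then show ?thesis using linear_op_zero[OF assms] by simp
qed

lemma linear_op_sum: assumes "linear_op T" "finite A"
  shows "T (\<lambda>S. \<Sum>x\<in>A. c x * G x S) = (\<lambda>S. \<Sum>x\<in>A. c x * T (G x) S)"
  using assms(2)
proof (induction A rule: finite_induct)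
  case empty then show ?case using linear_op_zero[OF assms(1)] by simp
next
  case (insert x A)
  have "T (\<lambda>S. \<Sum>y\<in>insert x A. c y * G y S) = T (\<lambda>S. c x * G x S + (\<Sum>y\<in>A. c y * G y S))"
    using insert by simp
  also have "\<dots> = (\<lambda>S. c x * T (G x) S + T (\<lambda>S. \<Sum>y\<in>A. c y * G y S) S)"
    using linear_opD[OF assms(1), of "c x" "G x" "\<lambda>S. \<Sum>y\<in>A. c y * G y S"] by simp
  finally show ?case using insert by simp
qed

lemma poly_op_0[simp]: "poly_op T 0 F = (\<lambda>S. 0)" by (simp add: poly_op_def)

lemma poly_op_pCons:
  assumes "linear_op T"
  shows "poly_op T (pCons a p) F = (\<lambda>S. a * F S + T (poly_op T p F) S)"
proof (cases "p = 0 \<and> a = 0")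
  case True then show ?thesis using linear_op_zero[OF assms] by (simp add: poly_op_def)
next
  case False
  then have "coeffs (pCons a p) = a # coeffs p" by (auto simp: cCons_def)
  then show ?thesis by (simp add: poly_op_def)
qed

lemma poly_op_const: assumes "linear_op T" shows "poly_op T [:c:] F = (\<lambda>S. c * F S)"
  using poly_op_pCons[OF assms, of c 0] linear_op_zero[OF assms] by simp

lemma poly_op_add:
  assumes "linear_op T"
  shows "poly_op T (p + q) F = (\<lambda>S. poly_op T p F S + poly_op T q F S)"
proof (induction p arbitrary: q rule: pCons_induct)
  case 0 then show ?case by simp
next
  case (pCons a p)
  obtain b q' where q: "q = pCons b q'" by (cases q) auto
  have "poly_op T (pCons a p + q) F = poly_op T (pCons (a + b) (p + q')) F" by (simp add: q)
  also have "\<dots> = (\<lambda>S. (a + b) * F S + T (\<lambda>S. poly_op T p F S + poly_op T q' F S) S)"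
    using poly_op_pCons[OF assms] pCons.IH by simp
  also have "\<dots> = (\<lambda>S. poly_op T (pCons a p) F S + poly_op T q F S)"
    unfolding q poly_op_pCons[OF assms] linear_op_add[OF assms] by (simp add: algebra_simps)
  finally show ?case .
qed

lemma poly_op_smult:
  assumes "linear_op T"
  shows "poly_op T (smult c p) F = (\<lambda>S. c * poly_op T p F S)"
proof (induction p rule: pCons_induct)
  case 0 then show ?case by simp
next
  case (pCons a p)
  show ?case unfolding smult_pCons poly_op_pCons[OF assms] pCons.IH linear_op_smult[OF assms]
    by (simp add: algebra_simps)
qed

lemma poly_op_diff:
  assumes "linear_op T"
  shows "poly_op T (p - q) F = (\<lambda>S. poly_op T p F S - poly_op T q F S)"
proof -
  have e: "p - q = p + smult (-1) q" by simp
  show ?thesis unfolding e poly_op_add[OF assms] poly_op_smult[OF assms] by simp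
qed

lemma poly_op_linear_combination:
  assumes "linear_op T"
  shows "poly_op T p (\<lambda>S. a * F S + G S) = (\<lambda>S. a * poly_op T p F S + poly_op T p G S)"
proof (induction p rule: pCons_induct)
  case 0 then show ?case by simp
next
  case (pCons c p)
  show ?case unfolding poly_op_pCons[OF assms] pCons.IH
    using linear_opD[OF assms, of a "poly_op T p F" "poly_op T p G"] by (simp add: algebra_simps)
qed

lemma linear_op_poly_op: assumes "linear_op T" shows "linear_op (poly_op T p)"
  unfolding linear_op_def using poly_op_linear_combination[OF assms] by blast

lemma poly_op_mult:
  assumes "linear_op T"
  shows "poly_op T (p * q) F = poly_op T p (poly_op T q F)"
proof (induction p rule: pCons_induct)
  case 0 then show ?case by simp
next
  case (pCons a p)
  have "pCons a p * q = smult a q + pCons 0 (p * q)" by simp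
  then have "poly_op T (pCons a p * q) F = (\<lambda>S. a * poly_op T q F S + T (poly_op T (p * q) F) S)"
    using poly_op_add[OF assms] poly_op_smult[OF assms] poly_op_pCons[OF assms] by simp
  then show ?case using pCons.IH poly_op_pCons[OF assms] by simp
qed

lemma poly_op_linear_factor: assumes "linear_op T" shows "poly_op T [:- c, 1:] F = (\<lambda>S. T F S - c * F S)"
  using poly_op_pCons[OF assms] poly_op_const[OF assms] linear_op_zero[OF assms] by simp

lemma poly_op_sum:
  assumes "linear_op T" "finite I"
  shows "poly_op T (\<Sum>i\<in>I. p i) F = (\<lambda>S. \<Sum>i\<in>I. poly_op T (p i) F S)"
  using assms(2)
proof (induction I rule: finite_induct)
  case empty then show ?case by simp
next
  case (insert x I) then show ?case using poly_op_add[OF assms(1)] by simp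
qed

lemma poly_op_sum_fun:
  assumes "linear_op T" "finite A"
  shows "poly_op T p (\<lambda>S. \<Sum>x\<in>A. c x * G x S) = (\<lambda>S. \<Sum>x\<in>A. c x * poly_op T p (G x) S)"
  using linear_op_sum[OF linear_op_poly_op[OF assms(1)] assms(2)] .

definition local_op :: "'a set \<Rightarrow> 'a real_op \<Rightarrow> bool" where
  "local_op V T \<longleftrightarrow> (\<forall>F G. (\<forall>S\<in>V. F S = G S) \<longrightarrow> (\<forall>S\<in>V. T F S = T G S))"

lemma poly_op_local:
  assumes "linear_op T" "local_op V T"
  shows "\<forall>F G. (\<forall>S\<in>V. F S = G S) \<longrightarrow> (\<forall>S\<in>V. poly_op T p F S = poly_op T p G S)"
proof (induction p rule: pCons_induct)
  case 0 then show ?case by simp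
next
  case (pCons a p)
  show ?case
  proof (intro allI impI ballI)
    fix F G :: "'a \<Rightarrow> real" and S assume FG: "\<forall>S\<in>V. F S = G S" and S: "S \<in> V"
    have h: "\<And>S'. S' \<in> V \<Longrightarrow> poly_op T p F S' = poly_op T p G S'" using pCons.IH[rule_format, of F G] FG by blast
    have "T (poly_op T p F) S = T (poly_op T p G) S" by (rule assms(2)[unfolded local_op_def, rule_format, OF h S])
    then show "poly_op T (pCons a p) F S = poly_op T (pCons a p) G S"
      unfolding poly_op_pCons[OF assms(1)] using FG S by simp
  qed
qed

lemma poly_op_eigenvector:
  assumes "linear_op T" "local_op V T" and eig: "\<forall>S\<in>V. T G S = \<theta> * G S"
  shows "\<forall>S\<in>V. poly_op T p G S = poly p \<theta> * G S"
proof (induction p rule: pCons_induct)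
  case 0 then show ?case by simp
next
  case (pCons a p)
  show ?case
  proof
    fix S assume S: "S \<in> V"
    have h: "\<And>S'. S' \<in> V \<Longrightarrow> poly_op T p G S' = poly p \<theta> * G S'" using pCons.IH by simp
    have "T (poly_op T p G) S = T (\<lambda>S. poly p \<theta> * G S) S"
      by (rule assms(2)[unfolded local_op_def, rule_format, OF h S])
    also have "\<dots> = poly p \<theta> * (\<theta> * G S)" using linear_op_smult[OF assms(1)] eig S by simp
    finally show "poly_op T (pCons a p) G S = poly (pCons a p) \<theta> * G S"
      unfolding poly_op_pCons[OF assms(1)] by (simp add: algebra_simps)
  qed
qed

lemma poly_op_expand:
  assumes linear_op: "linear_op T" and local_op: "local_op V T" and fV: "finite V" and S: "S \<in> V"
  shows "poly_op T p F S = (\<Sum>X\<in>V. F X * poly_op T p (\<lambda>Y. if Y = X then 1 else 0) S)"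
proof -
  have h: "F S' = (\<lambda>Y. \<Sum>X\<in>V. F X * (if Y = X then 1 else 0)) S'" if S': "S' \<in> V" for S'
  proof -
    have "(\<Sum>X\<in>V. F X * (if S' = X then 1 else 0)) = (\<Sum>X\<in>V. if S' = X then F X else 0)"
      by (intro sum.cong refl) simp
    also have "\<dots> = F S'" using fV S' by (simp add: sum.delta)
    finally show ?thesis by simp
  qed
  have "poly_op T p F S = poly_op T p (\<lambda>Y. \<Sum>X\<in>V. F X * (if Y = X then 1 else 0)) S"
    using poly_op_local[OF linear_op local_op, rule_format, OF h S] .
  also have "\<dots> = (\<Sum>X\<in>V. F X * poly_op T p (\<lambda>Y. if Y = X then 1 else 0) S)"
    using poly_op_sum_fun[OF linear_op fV, of p F "\<lambda>X Y. if Y = X then 1 else 0"] by simp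
  finally show ?thesis .
qed

definition self_adjoint_on :: "'a set \<Rightarrow> 'a real_op \<Rightarrow> bool" where
  "self_adjoint_on V T \<longleftrightarrow> (\<forall>G H. (\<Sum>S\<in>V. G S * T H S) = (\<Sum>S\<in>V. T G S * H S))"

lemma poly_op_commute:
  assumes "linear_op T" shows "poly_op T p (T F) = T (poly_op T p F)"
proof -
  have "T F = poly_op T [:0, 1:] F" using poly_op_pCons[OF assms, of 0 "[:1:]"] poly_op_const[OF assms, of 1] by simp
  moreover have "T (poly_op T p F) = poly_op T [:0, 1:] (poly_op T p F)"
    using poly_op_pCons[OF assms, of 0 "[:1:]"] poly_op_const[OF assms, of 1] by simp
  ultimately show ?thesis using poly_op_mult[OF assms] by (metis mult.commute)
qed

lemma poly_op_self_adjoint: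
  assumes "linear_op T" "self_adjoint_on V T"
  shows "(\<Sum>S\<in>V. G S * poly_op T p H S) = (\<Sum>S\<in>V. poly_op T p G S * H S)"
proof (induction p arbitrary: G rule: pCons_induct)
  case 0 then show ?case by simp
next
  case (pCons a p)
  have "(\<Sum>S\<in>V. G S * poly_op T (pCons a p) H S) = a * (\<Sum>S\<in>V. G S * H S) + (\<Sum>S\<in>V. G S * T (poly_op T p H) S)"
    unfolding poly_op_pCons[OF assms(1)] by (simp add: algebra_simps sum.distrib sum_distrib_left)
  also have "(\<Sum>S\<in>V. G S * T (poly_op T p H) S) = (\<Sum>S\<in>V. T G S * poly_op T p H S)"
    using assms(2) unfolding self_adjoint_on_def by blast
  also have "\<dots> = (\<Sum>S\<in>V. poly_op T p (T G) S * H S)" using pCons.IH .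
  also have "\<dots> = (\<Sum>S\<in>V. T (poly_op T p G) S * H S)" using poly_op_commute[OF assms(1)] by simp
  finally show ?case unfolding poly_op_pCons[OF assms(1)] by (simp add: algebra_simps sum.distrib sum_distrib_left)
qed

lemma prod_linear_factors_dvd:
  fixes \<theta> :: "'x \<Rightarrow> real" and P :: "real poly"
  assumes "finite A" "inj_on \<theta> A" "\<forall>a\<in>A. poly P (\<theta> a) = 0"
  shows "(\<Prod>a\<in>A. [:- \<theta> a, 1:]) dvd P"
  using assms
proof (induction A arbitrary: P rule: finite_induct)
  case empty then show ?case by simp
next
  case (insert a A)
  have "poly P (\<theta> a) = 0" using insert.prems(2) by simp
  then have "[:- \<theta> a, 1:] dvd P" by (rule iffD1[OF poly_eq_0_iff_dvd])
  then obtain P' where P: "P = [:- \<theta> a, 1:] * P'" by (elim dvdE)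
  have "\<forall>b\<in>A. poly P' (\<theta> b) = 0"
  proof
    fix b assume b: "b \<in> A"
    have ne: "\<theta> b - \<theta> a \<noteq> 0" using inj_on_eq_iff[OF insert.prems(1), of b a] b insert.hyps(2) by auto
    have "poly P (\<theta> b) = 0" using insert.prems(2) b by simp
    moreover have "poly P (\<theta> b) = (\<theta> b - \<theta> a) * poly P' (\<theta> b)" unfolding P by (simp add: algebra_simps)
    ultimately show "poly P' (\<theta> b) = 0" using ne by simp
  qed
  moreover have "inj_on \<theta> A" using insert.prems(1) by (rule inj_on_subset) auto
  ultimately have d: "(\<Prod>a\<in>A. [:- \<theta> a, 1:]) dvd P'" using insert.IH by blast
  have "(\<Prod>a\<in>insert a A. [:- \<theta> a, 1:]) = [:- \<theta> a, 1:] * (\<Prod>a\<in>A. [:- \<theta> a, 1:])"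
    using insert.hyps by (rule prod.insert)
  then show ?case unfolding P by (simp only:) (rule mult_dvd_mono[OF dvd_refl d])
qed

definition lagrange_basis :: "(nat \<Rightarrow> real) \<Rightarrow> nat set \<Rightarrow> nat \<Rightarrow> real poly" where
  "lagrange_basis \<theta> I i = (\<Prod>j\<in>I - {i}. smult (1 / (\<theta> i - \<theta> j)) [:- \<theta> j, 1:])"

lemma poly_lagrange_basis:
  assumes "finite I" "inj_on \<theta> I" "i \<in> I" "j \<in> I"
  shows "poly (lagrange_basis \<theta> I i) (\<theta> j) = (if j = i then 1 else 0)"
proof (cases "j = i")
  case True
  have "poly (lagrange_basis \<theta> I i) (\<theta> j) = (\<Prod>k\<in>I - {i}. poly (smult (1 / (\<theta> i - \<theta> k)) [:- \<theta> k, 1:]) (\<theta> i))"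
    unfolding lagrange_basis_def poly_prod True by simp
  also have "\<dots> = (\<Prod>k\<in>I - {i}. 1)"
  proof (rule prod.cong[OF refl])
    fix k assume k: "k \<in> I - {i}"
    then have "\<theta> i - \<theta> k \<noteq> 0" using inj_on_eq_iff[OF assms(2), of i k] assms(3) by auto
    then show "poly (smult (1 / (\<theta> i - \<theta> k)) [:- \<theta> k, 1:]) (\<theta> i) = 1"
      by (simp add: diff_divide_distrib[symmetric])
  qed
  finally show ?thesis using True by simp
next
  case False
  have "poly (lagrange_basis \<theta> I i) (\<theta> j) = (\<Prod>k\<in>I - {i}. poly (smult (1 / (\<theta> i - \<theta> k)) [:- \<theta> k, 1:]) (\<theta> j))"
    unfolding lagrange_basis_def poly_prod by simp
  also have "\<dots> = 0"
  proof (rule prod_zero)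
    show "finite (I - {i})" using assms(1) by simp
    show "\<exists>k\<in>I - {i}. poly (smult (1 / (\<theta> i - \<theta> k)) [:- \<theta> k, 1:]) (\<theta> j) = 0"
      using False assms(4) by (intro bexI[of _ j]) auto
  qed
  finally show ?thesis using False by simp
qed

lemma lagrange_decomposition:
  fixes \<theta> :: "nat \<Rightarrow> real"
  assumes fI: "finite I" and inj: "inj_on \<theta> I"
  obtains Q where "R = (\<Sum>i\<in>I. smult (poly R (\<theta> i)) (lagrange_basis \<theta> I i * lagrange_basis \<theta> I i))
      + Q * (\<Prod>i\<in>I. [:- \<theta> i, 1:])"
proof -
  define P where "P = R - (\<Sum>i\<in>I. smult (poly R (\<theta> i)) (lagrange_basis \<theta> I i * lagrange_basis \<theta> I i))"
  have "\<forall>j\<in>I. poly P (\<theta> j) = 0"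
  proof
    fix j assume j: "j \<in> I"
    have "poly (\<Sum>i\<in>I. smult (poly R (\<theta> i)) (lagrange_basis \<theta> I i * lagrange_basis \<theta> I i)) (\<theta> j)
          = (\<Sum>i\<in>I. poly R (\<theta> i) * (poly (lagrange_basis \<theta> I i) (\<theta> j) * poly (lagrange_basis \<theta> I i) (\<theta> j)))"
      by (simp add: poly_sum)
    also have "\<dots> = (\<Sum>i\<in>I. if i = j then poly R (\<theta> j) else 0)"
      by (rule sum.cong[OF refl]) (use fI inj j poly_lagrange_basis in auto)
    also have "\<dots> = poly R (\<theta> j)" using fI j by simp
    finally show "poly P (\<theta> j) = 0" unfolding P_def by simp
  qed
  then have "(\<Prod>i\<in>I. [:- \<theta> i, 1:]) dvd P" by (rule prod_linear_factors_dvd[OF fI inj])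
  then obtain Q where "P = (\<Prod>i\<in>I. [:- \<theta> i, 1:]) * Q" by (elim dvdE)
  then show ?thesis using that[of Q] unfolding P_def by (simp add: algebra_simps)
qed

lemma quadratic_form_poly_op_lagrange:
  fixes T :: "'a real_op" and V :: "'a set" and \<theta> :: "nat \<Rightarrow> real"
  assumes lin: "linear_op T" and loc: "local_op V T" and sy: "self_adjoint_on V T"
    and fI: "finite I" and inj: "inj_on \<theta> I"
    and ann: "\<And>F S. S \<in> V \<Longrightarrow> poly_op T (\<Prod>i\<in>I. [:- \<theta> i, 1:]) F S = 0"
  shows "(\<Sum>S\<in>V. F S * poly_op T R F S) = (\<Sum>i\<in>I. poly R (\<theta> i) * (\<Sum>S\<in>V. (poly_op T (lagrange_basis \<theta> I i) F S)\<^sup>2))"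
proof -
  let ?M = "\<Prod>i\<in>I. [:- \<theta> i, 1:]"
  let ?L = "lagrange_basis \<theta> I"
  obtain Q where R: "R = (\<Sum>i\<in>I. smult (poly R (\<theta> i)) (?L i * ?L i)) + Q * ?M"
    using lagrange_decomposition[OF fI inj] .
  have vanish: "poly_op T Q (poly_op T ?M F) S = 0" if "S \<in> V" for S
  proof -
    have "poly_op T Q (poly_op T ?M F) S = poly_op T Q (\<lambda>S. 0) S"
      using poly_op_local[OF lin loc, rule_format, of "poly_op T ?M F" "\<lambda>S. 0" S] ann that by simp
    also have "\<dots> = 0" using linear_op_zero[OF linear_op_poly_op[OF lin]] by metis
    finally show ?thesis .
  qed
  have expand: "poly_op T R F S = (\<Sum>i\<in>I. poly R (\<theta> i) * poly_op T (?L i) (poly_op T (?L i) F) S)"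
    if "S \<in> V" for S
    by (subst R) (simp add: poly_op_add[OF lin] poly_op_sum[OF lin fI] poly_op_smult[OF lin]
        poly_op_mult[OF lin] vanish[OF that])
  have "(\<Sum>S\<in>V. F S * poly_op T R F S)
      = (\<Sum>S\<in>V. \<Sum>i\<in>I. poly R (\<theta> i) * (F S * poly_op T (?L i) (poly_op T (?L i) F) S))"
    by (simp add: expand sum_distrib_left mult.left_commute cong: sum.cong)
  also have "\<dots> = (\<Sum>i\<in>I. poly R (\<theta> i) * (\<Sum>S\<in>V. F S * poly_op T (?L i) (poly_op T (?L i) F) S))"
    by (subst sum.swap) (simp add: sum_distrib_left)
  also have "\<dots> = (\<Sum>i\<in>I. poly R (\<theta> i) * (\<Sum>S\<in>V. (poly_op T (?L i) F S)\<^sup>2))"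
    by (simp add: poly_op_self_adjoint[OF lin sy] power2_eq_square)
  finally show ?thesis .
qed

section \<open>Degree-2 sum-of-squares certificates\<close>

lemma sum_list_map_concat: "sum_list (map f (concat xss)) = sum_list (map (\<lambda>xs. sum_list (map f xs)) xss)"
  by (induction xss) auto

lemma sos_deg2_proofI:
  fixes V :: "'v set" and I :: "'i set"
  assumes fV: "finite V" and fI: "finite I" and w: "\<And>i. i \<in> I \<Longrightarrow> w i \<ge> 0"
    and eq: "\<And>F. g F - h F = (\<Sum>i\<in>I. w i * (\<Sum>S\<in>V. (\<Sum>X\<in>V. e i S X * F X)\<^sup>2))"
  shows "sos_deg2_proof V g h"
proof -
  obtain Vl where Vl: "set Vl = V" "distinct Vl" using finite_distinct_list[OF fV] by blast
  obtain Il where Il: "set Il = I" "distinct Il" using finite_distinct_list[OF fI] by blast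
  define qs where "qs = concat (map (\<lambda>i. map (\<lambda>S. (0::real, \<lambda>X. sqrt (w i) * e i S X)) Vl) Il)"
  have "\<forall>F. g F - h F = (\<Sum>(c, b)\<leftarrow>qs. (affine_form V c b F)\<^sup>2)
              + (\<Sum>X\<in>V. (0::real)\<^sup>2 * F X + (0::real)\<^sup>2 * (1 - F X))"
  proof
    fix F
    have "(\<Sum>(c, b)\<leftarrow>qs. (affine_form V c b F)\<^sup>2)
        = sum_list (map (\<lambda>i. sum_list (map (\<lambda>S. (affine_form V 0 (\<lambda>X. sqrt (w i) * e i S X) F)\<^sup>2) Vl)) Il)"
      unfolding qs_def sum_list_map_concat by (simp add: comp_def)
    also have "\<dots> = (\<Sum>i\<in>I. \<Sum>S\<in>V. (affine_form V 0 (\<lambda>X. sqrt (w i) * e i S X) F)\<^sup>2)"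
      using Vl Il by (simp add: sum_list_distinct_conv_sum_set)
    also have "\<dots> = (\<Sum>i\<in>I. w i * (\<Sum>S\<in>V. (\<Sum>X\<in>V. e i S X * F X)\<^sup>2))"
    proof (intro sum.cong refl)
      fix i assume i: "i \<in> I"
      have "(\<Sum>S\<in>V. (affine_form V 0 (\<lambda>X. sqrt (w i) * e i S X) F)\<^sup>2) = (\<Sum>S\<in>V. w i * (\<Sum>X\<in>V. e i S X * F X)\<^sup>2)"
      proof (intro sum.cong refl)
        fix S
        have "affine_form V 0 (\<lambda>X. sqrt (w i) * e i S X) F = sqrt (w i) * (\<Sum>X\<in>V. e i S X * F X)"
          unfolding affine_form_def by (simp add: sum_distrib_left mult_ac)
        then show "(affine_form V 0 (\<lambda>X. sqrt (w i) * e i S X) F)\<^sup>2 = w i * (\<Sum>X\<in>V. e i S X * F X)\<^sup>2"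
          using w[OF i] by (simp add: power_mult_distrib)
      qed
      then show "(\<Sum>S\<in>V. (affine_form V 0 (\<lambda>X. sqrt (w i) * e i S X) F)\<^sup>2) = w i * (\<Sum>S\<in>V. (\<Sum>X\<in>V. e i S X * F X)\<^sup>2)"
        by (simp add: sum_distrib_left)
    qed
    finally show "g F - h F = (\<Sum>(c, b)\<leftarrow>qs. (affine_form V c b F)\<^sup>2) + (\<Sum>X\<in>V. (0::real)\<^sup>2 * F X + (0::real)\<^sup>2 * (1 - F X))"
      using eq by simp
  qed
  then show ?thesis unfolding sos_deg2_proof_def
    by (intro exI[of _ qs] exI[of _ "\<lambda>_. 0"]) simp
qed

lemma sos_deg2_proof_sound:
  assumes "sos_deg2_proof V g h" "finite V" "\<forall>X\<in>V. 0 \<le> F X \<and> F X \<le> 1"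
  shows "h F \<le> g F"
proof -
  obtain qs :: "(real \<times> ('a \<Rightarrow> real)) list" and s t where
    e: "\<forall>F. g F - h F = (\<Sum>(c, b)\<leftarrow>qs. (affine_form V c b F)\<^sup>2) + (\<Sum>X\<in>V. (s X)\<^sup>2 * F X + (t X)\<^sup>2 * (1 - F X))"
    using assms(1) unfolding sos_deg2_proof_def by blast
  have "0 \<le> (\<Sum>(c, b)\<leftarrow>qs. (affine_form V c b F)\<^sup>2)"
    by (rule sum_list_nonneg) auto
  moreover have "0 \<le> (\<Sum>X\<in>V. (s X)\<^sup>2 * F X + (t X)\<^sup>2 * (1 - F X))"
    using assms(3) by (intro sum_nonneg add_nonneg_nonneg mult_nonneg_nonneg) auto
  moreover have "g F - h F = (\<Sum>(c, b)\<leftarrow>qs. (affine_form V c b F)\<^sup>2) + (\<Sum>X\<in>V. (s X)\<^sup>2 * F X + (t X)\<^sup>2 * (1 - F X))"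
    using e by blast
  ultimately show ?thesis by linarith
qed

section \<open>Binomial coefficients and falling factorials\<close>

lemma choose_mult_general:
  "(t choose (m + i)) * ((m + i) choose m) = (t choose m) * ((t - m) choose i)"
proof (cases "m + i \<le> t")
  case True
  then show ?thesis using choose_mult[of m "m + i" t] by simp
next
  case False
  show ?thesis
  proof (cases "m \<le> t")
    case True
    then have "i > t - m" using False by simp
    then show ?thesis using False by (simp add: binomial_eq_0)
  next
    case False
    then show ?thesis by (simp add: binomial_eq_0)
  qed
qed

lemma alternating_binomial_inversion:
  assumes "t \<le> m + k"
  shows "(\<Sum>i\<le>k. (-1) ^ i * real ((m + i) choose m) * real (t choose (m + i))) = (if t = m then 1 else 0)"
proof -
  have "(\<Sum>i\<le>k. (-1) ^ i * real ((m + i) choose m) * real (t choose (m + i)))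
      = real (t choose m) * (\<Sum>i\<le>k. (-1) ^ i * real ((t - m) choose i))"
  proof -
    have "\<And>i. real ((m + i) choose m) * real (t choose (m + i)) = real (t choose m) * real ((t - m) choose i)"
      using choose_mult_general by (metis mult.commute of_nat_mult)
    then show ?thesis by (simp add: sum_distrib_left mult_ac)
  qed
  also have "\<dots> = (if t = m then 1 else 0)"
  proof (cases "m \<le> t")
    case False then show ?thesis by simp
  next
    case True
    have ext: "(\<Sum>i\<le>k. (-1) ^ i * real ((t - m) choose i)) = (\<Sum>i\<le>t - m. (-1) ^ i * real ((t - m) choose i))"
      by (rule sum.mono_neutral_right) (use assms in \<open>auto simp: binomial_eq_0\<close>)
    then show ?thesis
    proof (cases "t = m")
      case True
      then show ?thesis using ext by simp
    next
      case False
      then have "t - m > 0" using \<open>m \<le> t\<close> by simp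
      then show ?thesis using ext choose_alternating_sum[of "t - m"] False by simp
    qed
  qed
  finally show ?thesis .
qed

definition falling :: "real \<Rightarrow> nat \<Rightarrow> real" where
  "falling x s = (\<Prod>t<s. x - real t)"

lemma falling_pos: "k \<le> l \<Longrightarrow> falling (real l) k > 0"
  unfolding falling_def by (intro prod_pos) auto

lemma falling_add: "falling x (a + b) = falling x a * falling (x - real a) b"
proof (induction b)
  case 0 then show ?case by (simp add: falling_def)
next
  case (Suc b)
  have "falling x (a + Suc b) = falling x (a + b) * (x - real (a + b))" by (simp add: falling_def)
  also have "\<dots> = falling x a * (falling (x - real a) b * (x - real a - real b))" using Suc by (simp add: algebra_simps)
  also have "falling (x - real a) b * (x - real a - real b) = falling (x - real a) (Suc b)" by (simp add: falling_def)
  finally show ?case .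
qed

lemma falling_fact: "falling (real a) a = fact a"
proof (induction a)
  case 0 then show ?case by (simp add: falling_def)
next
  case (Suc a)
  have "falling (real (Suc a)) (Suc a) = falling (real (Suc a)) 1 * falling (real (Suc a) - 1) a"
    using falling_add[of "real (Suc a)" 1 a] by simp
  moreover have "falling (real (Suc a)) 1 = real (Suc a)" by (simp add: falling_def)
  moreover have "real (Suc a) - 1 = real a" by simp
  ultimately show ?case using Suc by simp
qed

lemma falling_zero: "a < s \<Longrightarrow> falling (real a) s = 0"
  unfolding falling_def by (rule prod_zero) (auto intro!: bexI[of _ a])

lemma falling_nonneg: "falling (real a) s \<ge> 0"
proof (cases "s \<le> a")
  case True then show ?thesis unfolding falling_def by (intro prod_nonneg) auto
next
  case False then show ?thesis using falling_zero by simp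
qed

lemma falling_ratio_swap:
  assumes "i \<le> l" "k \<le> l"
  shows "falling (real l - real i) k / falling (real l) k = falling (real l - real k) i / falling (real l) i"
proof -
  have "falling (real l) (i + k) = falling (real l) i * falling (real l - real i) k" by (rule falling_add)
  moreover have "falling (real l) (k + i) = falling (real l) k * falling (real l - real k) i" by (rule falling_add)
  ultimately have "falling (real l) i * falling (real l - real i) k = falling (real l) k * falling (real l - real k) i"
    by (simp add: add.commute)
  moreover have "falling (real l) i > 0" "falling (real l) k > 0" using falling_pos assms by auto
  ultimately show ?thesis by (simp add: field_simps)
qed

lemma falling_ratio_binomial:
  assumes "i \<le> l"
  shows "falling (real l - real i) (l - i) / falling (real l) (l - i) = 1 / real (l choose i)"
proof -
  have a: "falling (real l - real i) (l - i) = fact (l - i)" using falling_fact[of "l - i"] assms by (simp add: of_nat_diff)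
  have "falling (real l) ((l - i) + i) = falling (real l) (l - i) * falling (real l - real (l - i)) i" by (rule falling_add)
  moreover have "real l - real (l - i) = real i" using assms by (simp add: of_nat_diff)
  ultimately have "fact l = falling (real l) (l - i) * fact i" using assms falling_fact by simp
  then have b: "falling (real l) (l - i) = fact l / fact i" by (simp add: field_simps)
  have c: "fact l = real (l choose i) * (fact i * fact (l - i))"
    using binomial_fact[OF assms, where 'a=real] by (simp add: field_simps)
  have "real (l choose i) > 0" using assms by simp
  then show ?thesis unfolding a b c by (simp add: field_simps)
qed

lemma falling_ratio_nonneg:
  assumes "i \<le> l"
  shows "falling (real l - real i) s / falling (real l) s \<ge> 0"
proof (cases "s \<le> l")
  case True
  have "falling (real l - real i) s = falling (real (l - i)) s" using assms by (simp add: of_nat_diff)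
  then show ?thesis using falling_nonneg falling_pos[OF True] by simp
next
  case False
  then show ?thesis using falling_zero[of l s] by simp
qed

lemma ratio_factor_le:
  assumes "k \<le> l" "u < l"
  shows "(real l - real k - real u) / (real l - real u) \<le> (real l - real k) / real l"
proof -
  have p: "real l - real u > 0" "real l > 0" using assms by auto
  have "(real l - real k - real u) * real l \<le> (real l - real k) * (real l - real u)"
    using assms by (simp add: algebra_simps mult_right_mono)
  then show ?thesis using p by (simp add: divide_simps)
qed

lemma ratio_factor_less:
  assumes "1 \<le> k" "k \<le> l" "2 \<le> l"
  shows "(real l - real k - 1) / (real l - 1) < (real l - real k) / real l"
proof -
  have p: "real l - 1 > 0" "real l > 0" using assms by auto
  have "(real l - real k - 1) * real l < (real l - real k) * (real l - 1)"
    using assms by (simp add: algebra_simps)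
  then show ?thesis using p by (simp add: divide_simps)
qed

lemma falling_ratio_bound:
  assumes k: "1 \<le> k" "k < l" and i: "i \<le> l"
  defines "q \<equiv> (real l - real k) / real l"
  shows "falling (real l - real k) i / falling (real l) i \<le> q ^ i"
    and "2 \<le> i \<Longrightarrow> falling (real l - real k) i / falling (real l) i < q ^ i"
proof -
  have qpos: "q > 0" unfolding q_def using k by simp
  let ?g = "\<lambda>u. (real l - real k - real u) / (real l - real u)"
  have eq: "falling (real l - real k) i / falling (real l) i = (\<Prod>u<i. ?g u)"
    unfolding falling_def by (simp add: prod_dividef)
  have A: "falling (real l - real k) i / falling (real l) i \<le> q ^ i \<and> (2 \<le> i \<longrightarrow> falling (real l - real k) i / falling (real l) i < q ^ i)"
  proof (cases "i \<le> l - k")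
    case True
    have g0: "\<And>u. u < i \<Longrightarrow> 0 \<le> ?g u" using True k by (intro divide_nonneg_nonneg) auto
    have gq: "\<And>u. u < i \<Longrightarrow> ?g u \<le> q" unfolding q_def using True k by (intro ratio_factor_le) auto
    have le: "(\<Prod>u<i. ?g u) \<le> (\<Prod>u<i. q)" by (rule prod_mono) (use g0 gq in auto)
    have lt: "(\<Prod>u<i. ?g u) < q ^ i" if i2: "2 \<le> i"
    proof -
      have "(\<Prod>u<i. ?g u) = ?g 1 * (\<Prod>u\<in>{..<i} - {1}. ?g u)"
        using i2 by (subst prod.remove[of _ 1]) auto
      also have "\<dots> \<le> ?g 1 * (\<Prod>u\<in>{..<i} - {1}. q)"
        using g0[of 1] i2 by (intro mult_left_mono prod_mono) (use g0 gq i2 in auto)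
      also have "\<dots> < q * (\<Prod>u\<in>{..<i} - {1}. q)"
      proof (rule mult_strict_right_mono)
        show "?g 1 < q" unfolding q_def using ratio_factor_less[of k l] k by simp
        show "0 < (\<Prod>u\<in>{..<i} - {1}. q)" using qpos by (intro prod_pos) auto
      qed
      also have "\<dots> = q ^ i"
      proof -
        have "card ({..<i} - {1}) = i - 1" using i2 by simp
        then show ?thesis using i2 by (simp add: power_eq_if[of q i])
      qed
      finally show ?thesis .
    qed
    show ?thesis unfolding eq using le lt by simp
  next
    case False
    have z: "(\<Prod>u<i. ?g u) = 0"
      by (rule prod_zero) (use False k in \<open>auto intro!: bexI[of _ "l - k"] simp: of_nat_diff\<close>)
    show ?thesis unfolding eq z using qpos by simp
  qed
  then show "falling (real l - real k) i / falling (real l) i \<le> q ^ i" by simp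
  show "2 \<le> i \<Longrightarrow> falling (real l - real k) i / falling (real l) i < q ^ i" using A by simp
qed

section \<open>Up and down operators on subsets\<close>

lemma finite_johnson_vertices[simp]: "finite (johnson_vertices n l)"
  unfolding johnson_vertices_def by (rule finite_subset[of _ "Pow {..<n}"]) auto

lemma card_johnson_vertices: "card (johnson_vertices n l) = n choose l"
  unfolding johnson_vertices_def using n_subsets[of "{..<n}" l] by simp

definition down_op :: "nat \<Rightarrow> nat set real_op" where
  "down_op n F Y = (\<Sum>x\<in>{..<n} - Y. F (insert x Y))"

definition up_op :: "nat set real_op" where
  "up_op G S = (\<Sum>y\<in>S. G (S - {y}))"

definition up_down :: "nat \<Rightarrow> nat set real_op" where
  "up_down n G = up_op (down_op n G)"

lemma down_up_commute:
  assumes S: "S \<subseteq> {..<n}"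
  shows "down_op n (up_op G) S = up_op (down_op n G) S + (real n - 2 * real (card S)) * G S"
proof -
  have fS: "finite S" using S finite_subset by blast
  have 1: "down_op n (up_op G) S = (\<Sum>x\<in>{..<n} - S. G S + (\<Sum>y\<in>S. G (insert x (S - {y}))))"
    unfolding down_op_def up_op_def
  proof (rule sum.cong[OF refl])
    fix x assume x: "x \<in> {..<n} - S"
    have "(\<Sum>y\<in>insert x S. G (insert x S - {y})) = G (insert x S - {x}) + (\<Sum>y\<in>S. G (insert x S - {y}))"
      using x fS by (simp add: sum.insert)
    also have "insert x S - {x} = S" using x by auto
    also have "(\<Sum>y\<in>S. G (insert x S - {y})) = (\<Sum>y\<in>S. G (insert x (S - {y})))"
      by (rule sum.cong) (use x in \<open>auto intro!: arg_cong[where f=G]\<close>)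
    finally show "(\<Sum>y\<in>insert x S. G (insert x S - {y})) = G S + (\<Sum>y\<in>S. G (insert x (S - {y})))" .
  qed
  have 2: "up_op (down_op n G) S = (\<Sum>y\<in>S. G S + (\<Sum>x\<in>{..<n} - S. G (insert x (S - {y}))))"
    unfolding down_op_def up_op_def
  proof (rule sum.cong[OF refl])
    fix y assume y: "y \<in> S"
    have e: "{..<n} - (S - {y}) = insert y ({..<n} - S)" using y S by auto
    have "(\<Sum>x\<in>{..<n} - (S - {y}). G (insert x (S - {y}))) = G (insert y (S - {y})) + (\<Sum>x\<in>{..<n} - S. G (insert x (S - {y})))"
      unfolding e using y by (simp add: sum.insert)
    also have "insert y (S - {y}) = S" using y by auto
    finally show "(\<Sum>x\<in>{..<n} - (S - {y}). G (insert x (S - {y}))) = G S + (\<Sum>x\<in>{..<n} - S. G (insert x (S - {y})))" .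
  qed
  have c: "card ({..<n} - S) = n - card S" using S by (simp add: card_Diff_subset fS)
  have cs: "card S \<le> n" using card_mono[OF _ S] by simp
  have sw: "(\<Sum>x\<in>{..<n} - S. \<Sum>y\<in>S. G (insert x (S - {y}))) = (\<Sum>y\<in>S. \<Sum>x\<in>{..<n} - S. G (insert x (S - {y})))"
    by (rule sum.swap)
  show ?thesis unfolding 1 2 sum.distrib sw
    using c cs by (simp add: algebra_simps of_nat_diff)
qed

lemma down_op_funpow:
  assumes "Y \<subseteq> {..<n}"
  shows "(down_op n ^^ s) F Y = fact s * (\<Sum>S\<in>{S. Y \<subseteq> S \<and> S \<subseteq> {..<n} \<and> card S = card Y + s}. F S)"
  using assms
proof (induction s arbitrary: Y)
  case 0
  have fY: "finite Y" using 0 finite_subset by blast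
  have "\<And>S. Y \<subseteq> S \<Longrightarrow> S \<subseteq> {..<n} \<Longrightarrow> card S = card Y \<Longrightarrow> S = Y"
    by (metis card_subset_eq finite_lessThan finite_subset)
  then have "{S. Y \<subseteq> S \<and> S \<subseteq> {..<n} \<and> card S = card Y} = {Y}"
    using 0 by auto
  then show ?case by simp
next
  case (Suc s)
  have fY: "finite Y" using Suc.prems finite_subset by blast
  define BB where "BB = {S. Y \<subseteq> S \<and> S \<subseteq> {..<n} \<and> card S = card Y + Suc s}"
  have fBB: "finite BB" unfolding BB_def by (rule finite_subset[of _ "Pow {..<n}"]) auto
  have "(down_op n ^^ Suc s) F Y = (\<Sum>x\<in>{..<n} - Y. (down_op n ^^ s) F (insert x Y))"
    by (simp add: down_op_def)
  also have "\<dots> = (\<Sum>x\<in>{..<n} - Y. fact s * (\<Sum>S\<in>{S\<in>BB. x \<in> S}. F S))"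
  proof (rule sum.cong[OF refl])
    fix x assume x: "x \<in> {..<n} - Y"
    have "insert x Y \<subseteq> {..<n}" using x Suc.prems by auto
    note IH = Suc.IH[OF this]
    have "{S. insert x Y \<subseteq> S \<and> S \<subseteq> {..<n} \<and> card S = card (insert x Y) + s} = {S\<in>BB. x \<in> S}"
      using x fY unfolding BB_def by auto
    then show "(down_op n ^^ s) F (insert x Y) = fact s * (\<Sum>S\<in>{S\<in>BB. x \<in> S}. F S)"
      using IH by simp
  qed
  also have "\<dots> = fact s * (\<Sum>x\<in>{..<n} - Y. \<Sum>S\<in>{S\<in>BB. x \<in> S}. F S)"
    by (simp add: sum_distrib_left)
  also have "(\<Sum>x\<in>{..<n} - Y. \<Sum>S\<in>{S\<in>BB. x \<in> S}. F S) = (\<Sum>S\<in>BB. \<Sum>x\<in>{x\<in>{..<n} - Y. x \<in> S}. F S)"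
    by (rule sum.swap_restrict) (use fBB in auto)
  also have "\<dots> = (\<Sum>S\<in>BB. of_nat (Suc s) * F S)"
  proof (rule sum.cong[OF refl])
    fix S assume S: "S \<in> BB"
    have e: "{x\<in>{..<n} - Y. x \<in> S} = S - Y" using S unfolding BB_def by auto
    have "card (S - Y) = Suc s" using S fY unfolding BB_def by (simp add: card_Diff_subset)
    then show "(\<Sum>x\<in>{x\<in>{..<n} - Y. x \<in> S}. F S) = of_nat (Suc s) * F S" unfolding e by simp
  qed
  also have "\<dots> = of_nat (Suc s) * sum F BB" by (simp add: sum_distrib_left)
  finally show ?case by (simp add: BB_def)
qed

lemma up_op_funpow:
  assumes "finite S" "s \<le> card S"
  shows "(up_op ^^ s) G S = fact s * (\<Sum>Y\<in>{Y. Y \<subseteq> S \<and> card Y = card S - s}. G Y)"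
  using assms
proof (induction s arbitrary: S)
  case 0
  have "\<And>Y. Y \<subseteq> S \<Longrightarrow> card Y = card S \<Longrightarrow> Y = S"
    using 0 by (metis card_subset_eq)
  then have "{Y. Y \<subseteq> S \<and> card Y = card S} = {S}"
    by auto
  then show ?case by simp
next
  case (Suc s)
  define BB where "BB = {Y. Y \<subseteq> S \<and> card Y = card S - Suc s}"
  have fBB: "finite BB" unfolding BB_def using Suc.prems(1) by simp
  have "(up_op ^^ Suc s) G S = (\<Sum>y\<in>S. (up_op ^^ s) G (S - {y}))"
    by (simp add: up_op_def)
  also have "\<dots> = (\<Sum>y\<in>S. fact s * (\<Sum>Y\<in>{Y\<in>BB. y \<notin> Y}. G Y))"
  proof (rule sum.cong[OF refl])
    fix y assume y: "y \<in> S"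
    have c: "card (S - {y}) = card S - 1" using y Suc.prems by simp
    have "finite (S - {y})" "s \<le> card (S - {y})" using Suc.prems c by auto
    note IH = Suc.IH[OF this]
    have "{Y. Y \<subseteq> S - {y} \<and> card Y = card (S - {y}) - s} = {Y\<in>BB. y \<notin> Y}"
      unfolding BB_def c by auto
    then show "(up_op ^^ s) G (S - {y}) = fact s * (\<Sum>Y\<in>{Y\<in>BB. y \<notin> Y}. G Y)"
      using IH by simp
  qed
  also have "\<dots> = fact s * (\<Sum>y\<in>S. \<Sum>Y\<in>{Y\<in>BB. y \<notin> Y}. G Y)"
    by (simp add: sum_distrib_left)
  also have "(\<Sum>y\<in>S. \<Sum>Y\<in>{Y\<in>BB. y \<notin> Y}. G Y) = (\<Sum>Y\<in>BB. \<Sum>y\<in>{y\<in>S. y \<notin> Y}. G Y)"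
    by (rule sum.swap_restrict) (use fBB Suc.prems in auto)
  also have "\<dots> = (\<Sum>Y\<in>BB. of_nat (Suc s) * G Y)"
  proof (rule sum.cong[OF refl])
    fix Y assume Y: "Y \<in> BB"
    have e: "{y\<in>S. y \<notin> Y} = S - Y" by auto
    have fYY: "finite Y" "Y \<subseteq> S" using Y Suc.prems unfolding BB_def by (auto intro: finite_subset)
    have "card (S - Y) = card S - card Y" using card_Diff_subset[OF fYY(1,2)] .
    then have "card (S - Y) = Suc s" using Y Suc.prems unfolding BB_def by auto
    then show "(\<Sum>y\<in>{y\<in>S. y \<notin> Y}. G Y) = of_nat (Suc s) * G Y" unfolding e by simp
  qed
  also have "\<dots> = of_nat (Suc s) * sum G BB" by (simp add: sum_distrib_left)
  finally show ?case by (simp add: BB_def)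
qed

definition up_down_pow :: "nat \<Rightarrow> nat \<Rightarrow> nat set real_op" where
  "up_down_pow n s F = (up_op ^^ s) ((down_op n ^^ s) F)"

lemma up_down_pow_kernel:
  assumes S: "S \<in> johnson_vertices n l" and s: "s \<le> l"
  shows "up_down_pow n s F S = fact s ^ 2 * (\<Sum>V\<in>johnson_vertices n l. of_nat (card (S \<inter> V) choose (l - s)) * F V)"
proof -
  let ?V = "johnson_vertices n l"
  define A where "A = {Y. Y \<subseteq> S \<and> card Y = l - s}"
  have Sn: "S \<subseteq> {..<n}" and cS: "card S = l" using S unfolding johnson_vertices_def by auto
  have fS: "finite S" using Sn finite_subset by blast
  have fA: "finite A" unfolding A_def using fS by simp
  have "up_down_pow n s F S = fact s * (\<Sum>Y\<in>A. (down_op n ^^ s) F Y)"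
    unfolding up_down_pow_def A_def using up_op_funpow[OF fS, of s] cS s by simp
  also have "\<dots> = fact s * (\<Sum>Y\<in>A. fact s * (\<Sum>V\<in>{V\<in>?V. Y \<subseteq> V}. F V))"
  proof -
    have "(down_op n ^^ s) F Y = fact s * (\<Sum>V\<in>{V\<in>?V. Y \<subseteq> V}. F V)" if Y: "Y \<in> A" for Y
    proof -
      have Yn: "Y \<subseteq> {..<n}" using Y Sn unfolding A_def by auto
      have cY: "card Y = l - s" using Y unfolding A_def by auto
      have "{V. Y \<subseteq> V \<and> V \<subseteq> {..<n} \<and> card V = card Y + s} = {V\<in>?V. Y \<subseteq> V}"
        using cY s unfolding johnson_vertices_def by auto
      then show ?thesis using down_op_funpow[OF Yn, of s F] by simp
    qed
    then show ?thesis by simp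
  qed
  also have "\<dots> = fact s ^ 2 * (\<Sum>Y\<in>A. \<Sum>V\<in>{V\<in>?V. Y \<subseteq> V}. F V)"
    by (simp add: sum_distrib_left power2_eq_square mult.assoc)
  also have "(\<Sum>Y\<in>A. \<Sum>V\<in>{V\<in>?V. Y \<subseteq> V}. F V) = (\<Sum>V\<in>?V. \<Sum>Y\<in>{Y\<in>A. Y \<subseteq> V}. F V)"
    by (rule sum.swap_restrict) (use fA in auto)
  also have "\<dots> = (\<Sum>V\<in>?V. of_nat (card (S \<inter> V) choose (l - s)) * F V)"
  proof (rule sum.cong[OF refl])
    fix V assume "V \<in> ?V"
    have e: "{Y\<in>A. Y \<subseteq> V} = {Y. Y \<subseteq> S \<inter> V \<and> card Y = l - s}" unfolding A_def by auto
    have "card {Y. Y \<subseteq> S \<inter> V \<and> card Y = l - s} = card (S \<inter> V) choose (l - s)"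
      by (rule n_subsets) (use fS in auto)
    then show "(\<Sum>Y\<in>{Y\<in>A. Y \<subseteq> V}. F V) = of_nat (card (S \<inter> V) choose (l - s)) * F V"
      unfolding e by simp
  qed
  finally show ?thesis .
qed

lemma sum_mult_down_op_funpow:
  assumes j: "j \<le> l"
  shows "(\<Sum>Y\<in>{Y. Y \<subseteq> {..<n} \<and> card Y = j}. G Y * (down_op n ^^ (l - j)) F Y)
       = (\<Sum>S\<in>johnson_vertices n l. F S * (up_op ^^ (l - j)) G S)"
proof -
  let ?V = "johnson_vertices n l"
  let ?J = "{Y. Y \<subseteq> {..<n} \<and> card Y = j}"
  have fJ: "finite ?J" by (rule finite_subset[of _ "Pow {..<n}"]) auto
  have "(\<Sum>Y\<in>?J. G Y * (down_op n ^^ (l - j)) F Y) = (\<Sum>Y\<in>?J. G Y * (fact (l - j) * (\<Sum>S\<in>{S\<in>?V. Y \<subseteq> S}. F S)))"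
  proof (rule sum.cong[OF refl])
    fix Y assume Y: "Y \<in> ?J"
    have "{S. Y \<subseteq> S \<and> S \<subseteq> {..<n} \<and> card S = card Y + (l - j)} = {S\<in>?V. Y \<subseteq> S}"
      using Y j unfolding johnson_vertices_def by auto
    then show "G Y * (down_op n ^^ (l - j)) F Y = G Y * (fact (l - j) * (\<Sum>S\<in>{S\<in>?V. Y \<subseteq> S}. F S))"
      using down_op_funpow[of Y n "l - j" F] Y by simp
  qed
  also have "\<dots> = fact (l - j) * (\<Sum>Y\<in>?J. \<Sum>S\<in>{S\<in>?V. Y \<subseteq> S}. G Y * F S)"
    by (simp add: sum_distrib_left mult_ac)
  also have "(\<Sum>Y\<in>?J. \<Sum>S\<in>{S\<in>?V. Y \<subseteq> S}. G Y * F S) = (\<Sum>S\<in>?V. \<Sum>Y\<in>{Y\<in>?J. Y \<subseteq> S}. G Y * F S)"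
    by (rule sum.swap_restrict) (use fJ in auto)
  also have "fact (l - j) * \<dots> = (\<Sum>S\<in>?V. F S * (up_op ^^ (l - j)) G S)"
  proof -
    have "(up_op ^^ (l - j)) G S = fact (l - j) * (\<Sum>Y\<in>{Y\<in>?J. Y \<subseteq> S}. G Y)" if S: "S \<in> ?V" for S
    proof -
      have Sn: "S \<subseteq> {..<n}" and cS: "card S = l" using S unfolding johnson_vertices_def by auto
      have fS: "finite S" using Sn finite_subset by blast
      have "{Y. Y \<subseteq> S \<and> card Y = card S - (l - j)} = {Y\<in>?J. Y \<subseteq> S}" using Sn cS j by auto
      then show ?thesis using up_op_funpow[OF fS, of "l - j" G] cS by simp
    qed
    then show ?thesis by (simp add: sum_distrib_left mult_ac)
  qed
  finally show ?thesis .
qed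

lemma johnson_delta_eq_down_op:
  assumes Y: "Y \<subseteq> {..<n}" "card Y = j" and j: "j \<le> l" and ln: "l \<le> n"
  shows "johnson_delta n l Y F = (down_op n ^^ (l - j)) F Y / (fact (l - j) * of_nat ((n - j) choose (l - j)))"
proof -
  have fY: "finite Y" using Y finite_subset by blast
  let ?X = "{X. X \<subseteq> {..<n} - Y \<and> card X = l - card Y}"
  let ?B = "{S. Y \<subseteq> S \<and> S \<subseteq> {..<n} \<and> card S = card Y + (l - j)}"
  have "(\<Sum>X\<in>?X. F (Y \<union> X)) = (\<Sum>S\<in>?B. F S)"
  proof (rule sum.reindex_bij_witness[of _ "\<lambda>S. S - Y" "\<lambda>X. Y \<union> X"])
    fix X assume X: "X \<in> ?X"
    show "Y \<union> X - Y = X" using X by auto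
    have fX: "finite X" using X finite_subset[of X "{..<n}"] by auto
    have "card (Y \<union> X) = card Y + card X" using X fX fY by (intro card_Un_disjoint) auto
    then show "Y \<union> X \<in> ?B" using X Y by auto
  next
    fix S assume S: "S \<in> ?B"
    show "Y \<union> (S - Y) = S" using S by auto
    have "card (S - Y) = card S - card Y" using S fY by (simp add: card_Diff_subset)
    then show "S - Y \<in> ?X" using S Y by auto
  qed (auto)
  moreover have "card ?X = (n - j) choose (l - j)"
  proof -
    have "card ?X = card ({..<n} - Y) choose (l - card Y)" by (rule n_subsets) auto
    moreover have "card ({..<n} - Y) = n - j" using Y fY by (simp add: card_Diff_subset)
    ultimately show ?thesis using Y by simp
  qed
  ultimately show ?thesis unfolding johnson_delta_def using down_op_funpow[OF Y(1), of "l - j" F] Y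
    by (simp add: field_simps)
qed

lemma up_down_expand: "up_down n F S = (\<Sum>y\<in>S. \<Sum>x\<in>{..<n} - (S - {y}). F (insert x (S - {y})))"
  by (simp add: up_down_def up_op_def down_op_def)

lemma linear_up_down: "linear_op (up_down n)"
  unfolding linear_op_def up_down_expand by (simp add: sum.distrib sum_distrib_left)

lemma local_up_down: "local_op (johnson_vertices n l) (up_down n)"
  unfolding local_op_def
proof (intro allI impI ballI)
  fix F G :: "nat set \<Rightarrow> real" and S
  assume FG: "\<forall>S\<in>johnson_vertices n l. F S = G S" and S: "S \<in> johnson_vertices n l"
  have Sn: "S \<subseteq> {..<n}" and cS: "card S = l" using S unfolding johnson_vertices_def by auto
  have fS: "finite S" using Sn finite_subset by blast
  show "up_down n F S = up_down n G S" unfolding up_down_expand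
  proof (intro sum.cong refl)
    fix y x assume y: "y \<in> S" and x: "x \<in> {..<n} - (S - {y})"
    have "card (insert x (S - {y})) = card (S - {y}) + 1" using x fS by simp
    also have "card (S - {y}) = l - 1" using y fS cS by simp
    finally have "card (insert x (S - {y})) = l" using y cS fS card_gt_0_iff[of S] by auto
    then have "insert x (S - {y}) \<in> johnson_vertices n l" using x Sn unfolding johnson_vertices_def by auto
    then show "F (insert x (S - {y})) = G (insert x (S - {y}))" using FG by blast
  qed
qed

lemma up_down_eq_up_down_pow_1: "up_down n F = up_down_pow n 1 F" by (simp add: up_down_pow_def up_down_def)

lemma self_adjoint_up_down:
  assumes "l \<ge> 1"
  shows "self_adjoint_on (johnson_vertices n l) (up_down n)"
  unfolding self_adjoint_on_def
proof (intro allI)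
  fix G H :: "nat set \<Rightarrow> real"
  let ?V = "johnson_vertices n l"
  let ?k = "\<lambda>S V. real (card (S \<inter> V) choose (l - 1))"
  have e: "up_down n F S = (\<Sum>V\<in>?V. ?k S V * F V)" if "S \<in> ?V" for F S
    using up_down_pow_kernel[OF that, of 1 F] assms by (simp add: up_down_eq_up_down_pow_1)
  have "(\<Sum>S\<in>?V. G S * up_down n H S) = (\<Sum>S\<in>?V. \<Sum>V\<in>?V. G S * (?k S V * H V))"
    by (simp add: e sum_distrib_left)
  also have "\<dots> = (\<Sum>V\<in>?V. \<Sum>S\<in>?V. G S * (?k S V * H V))" by (rule sum.swap)
  also have "\<dots> = (\<Sum>V\<in>?V. (\<Sum>S\<in>?V. ?k V S * G S) * H V)"
  proof (intro sum.cong refl)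
    fix V :: "nat set"
    have "\<And>S. ?k S V = ?k V S" by (simp add: Int_commute)
    then show "(\<Sum>S\<in>?V. G S * (?k S V * H V)) = (\<Sum>S\<in>?V. ?k V S * G S) * H V"
      by (simp add: sum_distrib_left sum_distrib_right mult_ac)
  qed
  also have "\<dots> = (\<Sum>V\<in>?V. up_down n G V * H V)" using e by simp
  finally show "(\<Sum>S\<in>?V. G S * up_down n H S) = (\<Sum>S\<in>?V. up_down n G S * H S)" .
qed

lemma up_op_up_down:
  assumes Sn: "S \<subseteq> {..<n}"
  shows "up_op (up_down n H) S = up_down n (up_op H) S - (real n - 2 * real (card S) + 2) * up_op H S"
proof -
  have fS: "finite S" using Sn finite_subset by blast
  let ?c = "real n - 2 * real (card S) + 2"
  have "up_down n (up_op H) S = (\<Sum>y\<in>S. down_op n (up_op H) (S - {y}))" by (simp add: up_down_def up_op_def)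
  also have "\<dots> = (\<Sum>y\<in>S. up_op (down_op n H) (S - {y}) + ?c * H (S - {y}))"
  proof (rule sum.cong[OF refl])
    fix y assume y: "y \<in> S"
    have cy: "card (S - {y}) = card S - 1" using y fS by simp
    have "card S \<noteq> 0" using y fS by auto
    then have c: "real (card (S - {y})) = real (card S) - 1" using cy by simp
    have "S - {y} \<subseteq> {..<n}" using Sn by auto
    from down_up_commute[OF this, of H]
    have "down_op n (up_op H) (S - {y}) = up_op (down_op n H) (S - {y}) + (real n - 2 * real (card (S - {y}))) * H (S - {y})" .
    also have "real n - 2 * real (card (S - {y})) = ?c" unfolding c by simp
    finally show "down_op n (up_op H) (S - {y}) = up_op (down_op n H) (S - {y}) + ?c * H (S - {y})" .
  qed
  also have "\<dots> = (\<Sum>y\<in>S. up_op (down_op n H) (S - {y})) + ?c * (\<Sum>y\<in>S. H (S - {y}))"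
    by (simp add: sum.distrib sum_distrib_left)
  also have "(\<Sum>y\<in>S. up_op (down_op n H) (S - {y})) = up_op (up_down n H) S" by (simp add: up_down_def up_op_def[of "up_op (down_op n H)"])
  also have "(\<Sum>y\<in>S. H (S - {y})) = up_op H S" by (simp add: up_op_def)
  finally show ?thesis by simp
qed

lemma up_op_funpow_up_down:
  assumes "S \<subseteq> {..<n}" "s \<le> card S"
  shows "(up_op ^^ s) (up_down n G) S = up_down n ((up_op ^^ s) G) S - real s * (real n - 2 * real (card S) + real s + 1) * (up_op ^^ s) G S"
  using assms
proof (induction s arbitrary: S)
  case 0 then show ?case by simp
next
  case (Suc s)
  have fS: "finite S" using Suc.prems(1) finite_subset by blast
  let ?H = "(up_op ^^ s) G"
  have "(up_op ^^ Suc s) (up_down n G) S = (\<Sum>y\<in>S. (up_op ^^ s) (up_down n G) (S - {y}))" by (simp add: up_op_def)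
  also have "\<dots> = (\<Sum>y\<in>S. up_down n ?H (S - {y}) - real s * (real n - 2 * real (card S) + real s + 3) * ?H (S - {y}))"
  proof (rule sum.cong[OF refl])
    fix y assume y: "y \<in> S"
    have cy: "card (S - {y}) = card S - 1" using y fS by simp
    have "s \<le> card (S - {y})" using cy Suc.prems(2) by simp
    moreover have "S - {y} \<subseteq> {..<n}" using Suc.prems(1) by auto
    ultimately have IH: "(up_op ^^ s) (up_down n G) (S - {y}) = up_down n ?H (S - {y}) - real s * (real n - 2 * real (card (S - {y})) + real s + 1) * ?H (S - {y})"
      using Suc.IH by blast
    have c: "real (card (S - {y})) = real (card S) - 1" using cy Suc.prems(2) by simp
    show "(up_op ^^ s) (up_down n G) (S - {y}) = up_down n ?H (S - {y}) - real s * (real n - 2 * real (card S) + real s + 3) * ?H (S - {y})"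
      using IH unfolding c by (simp add: algebra_simps)
  qed
  also have "\<dots> = up_op (up_down n ?H) S - real s * (real n - 2 * real (card S) + real s + 3) * up_op ?H S"
    by (simp add: sum_subtractf sum_distrib_left up_op_def)
  also have "\<dots> = up_down n (up_op ?H) S - (real n - 2 * real (card S) + 2) * up_op ?H S - real s * (real n - 2 * real (card S) + real s + 3) * up_op ?H S"
    using up_op_up_down[OF Suc.prems(1)] by simp
  finally show ?case by (simp add: algebra_simps)
qed

definition up_down_eigenvalue :: "nat \<Rightarrow> nat \<Rightarrow> nat \<Rightarrow> real" where
  "up_down_eigenvalue n l i = (real l - real i) * (real n - real l - real i + 1)"

definition up_down_poly :: "nat \<Rightarrow> nat \<Rightarrow> nat \<Rightarrow> real poly" where
  "up_down_poly n l s = (\<Prod>t<s. [:- up_down_eigenvalue n l (l - t), 1:])"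

lemma up_down_pow_Suc:
  assumes S: "S \<in> johnson_vertices n l" and s: "s \<le> l"
  shows "up_down_pow n (Suc s) F S = up_down n (up_down_pow n s F) S - up_down_eigenvalue n l (l - s) * up_down_pow n s F S"
proof -
  have Sn: "S \<subseteq> {..<n}" and cS: "card S = l" using S unfolding johnson_vertices_def by auto
  have e1: "(up_op ^^ Suc s) = (up_op ^^ s) \<circ> up_op" by (rule funpow_Suc_right)
  have e2: "(down_op n ^^ Suc s) = down_op n \<circ> (down_op n ^^ s)" by simp
  have "up_down_pow n (Suc s) F S = (up_op ^^ s) (up_down n ((down_op n ^^ s) F)) S"
    unfolding up_down_pow_def e1 e2 by (simp add: up_down_def)
  also have "\<dots> = up_down n (up_down_pow n s F) S - real s * (real n - 2 * real l + real s + 1) * up_down_pow n s F S"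
    using up_op_funpow_up_down[OF Sn, of s] cS s by (simp add: up_down_pow_def)
  also have "real s * (real n - 2 * real l + real s + 1) = up_down_eigenvalue n l (l - s)"
    using s by (simp add: up_down_eigenvalue_def of_nat_diff algebra_simps)
  finally show ?thesis .
qed

lemma up_down_pow_eq_poly_op:
  assumes S: "S \<in> johnson_vertices n l" and s: "s \<le> l"
  shows "up_down_pow n s F S = poly_op (up_down n) (up_down_poly n l s) F S"
  using S s
proof (induction s arbitrary: S)
  case 0
  have "poly_op (up_down n) [:1:] F = (\<lambda>S. 1 * F S)" by (rule poly_op_const[OF linear_up_down])
  then show ?case by (simp add: up_down_pow_def up_down_poly_def one_pCons)
next
  case (Suc s)
  have IH: "\<And>S'. S' \<in> johnson_vertices n l \<Longrightarrow> up_down_pow n s F S' = poly_op (up_down n) (up_down_poly n l s) F S'"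
    using Suc by simp
  have "up_down n (up_down_pow n s F) S = up_down n (poly_op (up_down n) (up_down_poly n l s) F) S"
    by (rule local_up_down[unfolded local_op_def, rule_format, OF IH Suc.prems(1)])
  then have "up_down_pow n (Suc s) F S = up_down n (poly_op (up_down n) (up_down_poly n l s) F) S - up_down_eigenvalue n l (l - s) * poly_op (up_down n) (up_down_poly n l s) F S"
    using up_down_pow_Suc[OF Suc.prems(1), of s F] Suc by simp
  also have "\<dots> = poly_op (up_down n) ([:- up_down_eigenvalue n l (l - s), 1:] * up_down_poly n l s) F S"
    unfolding poly_op_mult[OF linear_up_down] poly_op_linear_factor[OF linear_up_down] by (rule refl)
  also have "[:- up_down_eigenvalue n l (l - s), 1:] * up_down_poly n l s = up_down_poly n l (Suc s)"
    by (simp add: up_down_poly_def mult.commute)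
  finally show ?case .
qed

lemma up_down_empty: "up_down n G {} = 0" by (simp add: up_down_def up_op_def)

lemma up_down_annihilated:
  assumes S: "S \<in> johnson_vertices n l"
  shows "poly_op (up_down n) (\<Prod>i\<in>{..l}. [:- up_down_eigenvalue n l i, 1:]) F S = 0"
proof -
  have Sn: "S \<subseteq> {..<n}" and cS: "card S = l" using S unfolding johnson_vertices_def by auto
  have fS: "finite S" using Sn finite_subset by blast
  have r: "(\<Prod>i\<in>{..l}. [:- up_down_eigenvalue n l i, 1:]) = (\<Prod>t<Suc l. [:- up_down_eigenvalue n l (l - t), 1:])"
    by (rule prod.reindex_bij_witness[of _ "\<lambda>t. l - t" "\<lambda>i. l - i"]) auto
  also have "\<dots> = [:- up_down_eigenvalue n l 0, 1:] * up_down_poly n l l" by (simp add: up_down_poly_def mult.commute)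
  finally have e: "(\<Prod>i\<in>{..l}. [:- up_down_eigenvalue n l i, 1:]) = [:- up_down_eigenvalue n l 0, 1:] * up_down_poly n l l" .
  let ?G = "(down_op n ^^ l) F"
  have "(up_op ^^ l) (up_down n ?G) S = fact l * (\<Sum>Y\<in>{Y. Y \<subseteq> S \<and> card Y = card S - l}. up_down n ?G Y)"
    using up_op_funpow[OF fS, of l] cS by simp
  also have "{Y. Y \<subseteq> S \<and> card Y = card S - l} = {{}}" using cS fS by (auto dest: finite_subset)
  finally have z: "(up_op ^^ l) (up_down n ?G) S = 0" by (simp add: up_down_empty)
  have "(up_op ^^ l) (up_down n ?G) S = up_down n (up_down_pow n l F) S - up_down_eigenvalue n l 0 * up_down_pow n l F S"
    using up_op_funpow_up_down[OF Sn, of l ?G] cS by (simp add: up_down_pow_def up_down_eigenvalue_def algebra_simps)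
  with z have z2: "up_down n (up_down_pow n l F) S - up_down_eigenvalue n l 0 * up_down_pow n l F S = 0" by simp
  have IH: "\<And>S'. S' \<in> johnson_vertices n l \<Longrightarrow> up_down_pow n l F S' = poly_op (up_down n) (up_down_poly n l l) F S'"
    using up_down_pow_eq_poly_op by simp
  have "up_down n (up_down_pow n l F) S = up_down n (poly_op (up_down n) (up_down_poly n l l) F) S"
    by (rule local_up_down[unfolded local_op_def, rule_format, OF IH S])
  then show ?thesis unfolding e poly_op_mult[OF linear_up_down] poly_op_linear_factor[OF linear_up_down]
    using z2 up_down_pow_eq_poly_op[OF S, of l F] by simp
qed

lemma up_down_eigenvalue_strict_antimono:
  assumes "i < j" "j \<le> l" "2 * l \<le> n"
  shows "up_down_eigenvalue n l j < up_down_eigenvalue n l i"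
proof -
  have "up_down_eigenvalue n l i - up_down_eigenvalue n l j = (real j - real i) * (real n + 1 - real i - real j)"
    by (simp add: up_down_eigenvalue_def algebra_simps)
  moreover have "real j - real i > 0" using assms by simp
  moreover have "real n + 1 - real i - real j > 0" using assms by simp
  ultimately show ?thesis by (smt (verit) mult_pos_pos)
qed

lemma inj_on_up_down_eigenvalue:
  assumes "2 * l \<le> n"
  shows "inj_on (up_down_eigenvalue n l) {..l}"
proof (rule inj_onI)
  fix i j assume "i \<in> {..l}" "j \<in> {..l}" "up_down_eigenvalue n l i = up_down_eigenvalue n l j"
  then show "i = j" using up_down_eigenvalue_strict_antimono[of i j l n] up_down_eigenvalue_strict_antimono[of j i l n] assms
    by (metis atMost_iff less_irrefl linorder_neqE_nat)
qed

lemma up_down_const: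
  assumes S: "S \<in> johnson_vertices n l" and l: "l \<ge> 1"
  shows "up_down n (\<lambda>_. 1) S = up_down_eigenvalue n l 0"
proof -
  have Sn: "S \<subseteq> {..<n}" and cS: "card S = l" using S unfolding johnson_vertices_def by auto
  have fS: "finite S" using Sn finite_subset by blast
  have ln: "l \<le> n" using card_mono[OF _ Sn] cS by simp
  have "up_down n (\<lambda>_. 1) S = (\<Sum>y\<in>S. real (card ({..<n} - (S - {y}))))" by (simp add: up_down_expand)
  also have "\<dots> = (\<Sum>y\<in>S. real n - real l + 1)"
  proof (rule sum.cong[OF refl])
    fix y assume y: "y \<in> S"
    have "card ({..<n} - (S - {y})) = n - card (S - {y})"
      using Sn fS by (subst card_Diff_subset) auto
    also have "card (S - {y}) = l - 1" using y fS cS by simp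
    finally show "real (card ({..<n} - (S - {y}))) = real n - real l + 1" using l ln by (simp add: of_nat_diff)
  qed
  also have "\<dots> = up_down_eigenvalue n l 0" using cS by (simp add: up_down_eigenvalue_def)
  finally show ?thesis .
qed

lemma poly_op_const_fun:
  assumes "l \<ge> 1" "S \<in> johnson_vertices n l"
  shows "poly_op (up_down n) p (\<lambda>_. 1) S = poly p (up_down_eigenvalue n l 0)"
  using poly_op_eigenvector[OF linear_up_down local_up_down, of n l "\<lambda>_. 1" "up_down_eigenvalue n l 0" p]
    up_down_const[OF _ assms(1)] assms(2) by simp

section \<open>The walk and the averages of deltas as polynomials in the up-down operator\<close>

definition inversion_coeff :: "nat \<Rightarrow> nat \<Rightarrow> nat \<Rightarrow> real" where
  "inversion_coeff m k i = (-1) ^ i * real ((m + i) choose m) / (fact (k - i))\<^sup>2"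

definition adjacency_poly :: "nat \<Rightarrow> nat \<Rightarrow> nat \<Rightarrow> real poly" where
  "adjacency_poly n l k = (\<Sum>i\<le>k. smult (inversion_coeff (l - k) k i) (up_down_poly n l (k - i)))"

lemma intersection_level_indicator:
  assumes S: "S \<in> johnson_vertices n l" and kl: "k \<le> l"
  shows "(if card (S \<inter> V) = l - k then 1 else 0)
       = (\<Sum>i\<le>k. (-1) ^ i * real ((l - k + i) choose (l - k)) * real (card (S \<inter> V) choose (l - (k - i))))"
proof -
  have "card (S \<inter> V) \<le> card S"
    using S by (intro card_mono) (auto simp: johnson_vertices_def intro: finite_subset)
  then have "card (S \<inter> V) \<le> l - k + k" using S kl by (simp add: johnson_vertices_def)
  then have "(if card (S \<inter> V) = l - k then 1 else 0)
      = (\<Sum>i\<le>k. (-1) ^ i * real ((l - k + i) choose (l - k)) * real (card (S \<inter> V) choose (l - k + i)))"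
    by (simp add: alternating_binomial_inversion)
  also have "\<dots> = (\<Sum>i\<le>k. (-1) ^ i * real ((l - k + i) choose (l - k)) * real (card (S \<inter> V) choose (l - (k - i))))"
  proof -
    have "\<And>i. i \<in> {..k} \<Longrightarrow> l - k + i = l - (k - i)" using kl by auto
    then show ?thesis by (intro sum.cong refl) (simp only:)
  qed
  finally show ?thesis .
qed

lemma sum_intersection_level_eq_poly_op:
  assumes S: "S \<in> johnson_vertices n l" and kl: "k \<le> l"
  shows "(\<Sum>V\<in>{V\<in>johnson_vertices n l. card (S \<inter> V) = l - k}. F V) = poly_op (up_down n) (adjacency_poly n l k) F S"
proof -
  let ?V = "johnson_vertices n l"
  let ?c = "\<lambda>i. (-1) ^ i * real ((l - k + i) choose (l - k))"
  have "(\<Sum>V\<in>{V\<in>?V. card (S \<inter> V) = l - k}. F V) = (\<Sum>V\<in>?V. (if card (S \<inter> V) = l - k then 1 else 0) * F V)"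
    by (simp add: sum.inter_filter) (intro sum.cong refl, simp)
  also have "\<dots> = (\<Sum>i\<le>k. ?c i * (\<Sum>V\<in>?V. real (card (S \<inter> V) choose (l - (k - i))) * F V))"
    unfolding intersection_level_indicator[OF S kl] sum_distrib_right
    by (subst sum.swap) (simp add: sum_distrib_left mult.assoc)
  also have "\<dots> = (\<Sum>i\<le>k. inversion_coeff (l - k) k i * up_down_pow n (k - i) F S)"
    using kl by (intro sum.cong refl) (simp add: up_down_pow_kernel[OF S] inversion_coeff_def)
  also have "\<dots> = (\<Sum>i\<le>k. inversion_coeff (l - k) k i * poly_op (up_down n) (up_down_poly n l (k - i)) F S)"
    using up_down_pow_eq_poly_op[OF S] kl by simp
  also have "\<dots> = poly_op (up_down n) (adjacency_poly n l k) F S"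
    unfolding adjacency_poly_def poly_op_sum[OF linear_up_down finite_atMost] poly_op_smult[OF linear_up_down] by simp
  finally show ?thesis .
qed

lemma card_intersection_level:
  assumes S: "S \<in> johnson_vertices n l" and kl: "k \<le> l" and l: "l \<ge> 1"
  shows "real (card {V\<in>johnson_vertices n l. card (S \<inter> V) = l - k}) = poly (adjacency_poly n l k) (up_down_eigenvalue n l 0)"
  using sum_intersection_level_eq_poly_op[OF S kl, of "\<lambda>_. 1"] poly_op_const_fun[OF l S] by simp

lemma johnson_adj_eq_intersection_level:
  assumes S: "S \<in> johnson_vertices n l" and ak: "\<alpha> * real l = real k" and kl: "k \<le> l"
  shows "{V. johnson_adj n l \<alpha> S V} = {V\<in>johnson_vertices n l. card (S \<inter> V) = l - k}"
proof -
  have "(1 - \<alpha>) * real l = real (l - k)" using ak kl by (simp add: algebra_simps of_nat_diff)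
  then show ?thesis using S unfolding johnson_adj_def by auto
qed

lemma johnson_walk_eq_poly_op:
  assumes S: "S \<in> johnson_vertices n l" and ak: "\<alpha> * real l = real k" and kl: "k \<le> l" and l: "l \<ge> 1"
  shows "johnson_walk n l \<alpha> F S = poly_op (up_down n) (adjacency_poly n l k) F S / poly (adjacency_poly n l k) (up_down_eigenvalue n l 0)"
  unfolding johnson_walk_def johnson_adj_eq_intersection_level[OF S ak kl] sum_intersection_level_eq_poly_op[OF S kl] card_intersection_level[OF S kl l] ..

definition delta_scale :: "nat \<Rightarrow> nat \<Rightarrow> nat \<Rightarrow> real" where
  "delta_scale n l j = 1 / (real (n choose j) * (fact (l - j) * real ((n - j) choose (l - j)))\<^sup>2)"

lemma subset_avg_delta_sq_eq:
  assumes j: "j \<le> l" and ln: "l \<le> n"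
  shows "subset_avg n j (\<lambda>Y. (johnson_delta n l Y F)\<^sup>2)
       = delta_scale n l j * (\<Sum>S\<in>johnson_vertices n l. F S * poly_op (up_down n) (up_down_poly n l (l - j)) F S)"
proof -
  let ?J = "{Y. Y \<subseteq> {..<n} \<and> card Y = j}"
  let ?c = "fact (l - j) * real ((n - j) choose (l - j))"
  have cJ: "card ?J = n choose j" using n_subsets[of "{..<n}" j] by simp
  have "(\<Sum>Y\<in>?J. (johnson_delta n l Y F)\<^sup>2) = (\<Sum>Y\<in>?J. (1 / ?c\<^sup>2) * ((down_op n ^^ (l - j)) F Y * (down_op n ^^ (l - j)) F Y))"
    by (intro sum.cong refl) (simp add: johnson_delta_eq_down_op[OF _ _ j ln] power2_eq_square)
  also have "\<dots> = (1 / ?c\<^sup>2) * (\<Sum>S\<in>johnson_vertices n l. F S * up_down_pow n (l - j) F S)"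
    unfolding sum_distrib_left[symmetric] sum_mult_down_op_funpow[OF j] up_down_pow_def ..
  also have "(\<Sum>S\<in>johnson_vertices n l. F S * up_down_pow n (l - j) F S) = (\<Sum>S\<in>johnson_vertices n l. F S * poly_op (up_down n) (up_down_poly n l (l - j)) F S)"
    by (intro sum.cong refl) (simp add: up_down_pow_eq_poly_op)
  finally show ?thesis unfolding subset_avg_def delta_scale_def cJ by (simp add: field_simps)
qed

lemma subset_avg_delta_sq_const:
  assumes j: "j \<le> l" and ln: "l \<le> n"
  shows "subset_avg n j (\<lambda>Y. (johnson_delta n l Y (\<lambda>_. 1))\<^sup>2) = 1"
proof -
  let ?J = "{Y. Y \<subseteq> {..<n} \<and> card Y = j}"
  have cJ: "card ?J = n choose j" using n_subsets[of "{..<n}" j] by simp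
  have "n choose j \<noteq> 0" using j ln by simp
  have "johnson_delta n l Y (\<lambda>_. 1) = 1" if Y: "Y \<in> ?J" for Y
  proof -
    have fY: "finite Y" using Y finite_subset by blast
    have "card {X. X \<subseteq> {..<n} - Y \<and> card X = l - card Y} = card ({..<n} - Y) choose (l - card Y)"
      by (rule n_subsets) auto
    also have "card ({..<n} - Y) = n - j" using Y fY by (simp add: card_Diff_subset)
    finally have "card {X. X \<subseteq> {..<n} - Y \<and> card X = l - card Y} \<noteq> 0" using Y j ln by simp
    then show ?thesis unfolding johnson_delta_def by simp
  qed
  then show ?thesis unfolding subset_avg_def cJ using \<open>n choose j \<noteq> 0\<close> cJ by simp
qed

lemma delta_scale_normalization:
  assumes j: "j \<le> l" and ln: "l \<le> n" and l: "l \<ge> 1"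
  shows "delta_scale n l j * real (n choose l) * poly (up_down_poly n l (l - j)) (up_down_eigenvalue n l 0) = 1"
proof -
  have "1 = delta_scale n l j * (\<Sum>S\<in>johnson_vertices n l. 1 * poly_op (up_down n) (up_down_poly n l (l - j)) (\<lambda>_. 1) S)"
    using subset_avg_delta_sq_eq[OF j ln, of "\<lambda>_. 1"] subset_avg_delta_sq_const[OF j ln] by simp
  also have "\<dots> = delta_scale n l j * (\<Sum>S\<in>johnson_vertices n l. poly (up_down_poly n l (l - j)) (up_down_eigenvalue n l 0))"
    using poly_op_const_fun[OF l] by simp
  finally show ?thesis by (simp add: card_johnson_vertices)
qed

definition up_down_poly_value :: "nat \<Rightarrow> nat \<Rightarrow> nat \<Rightarrow> nat \<Rightarrow> real" where
  "up_down_poly_value n l s i = (\<Prod>t<s. (real l - real i - real t) * (real n - real l + real t - real i + 1))"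

lemma poly_up_down_poly:
  assumes "s \<le> l"
  shows "poly (up_down_poly n l s) (up_down_eigenvalue n l i) = up_down_poly_value n l s i"
  unfolding up_down_poly_def up_down_poly_value_def poly_prod
proof (rule prod.cong[OF refl])
  fix t assume "t \<in> {..<s}"
  then have "t \<le> l" using assms by simp
  then show "poly [:- up_down_eigenvalue n l (l - t), 1:] (up_down_eigenvalue n l i) = (real l - real i - real t) * (real n - real l + real t - real i + 1)"
    by (simp add: up_down_eigenvalue_def of_nat_diff algebra_simps)
qed

lemma up_down_poly_value_0_pos:
  assumes "s \<le> l" "l \<le> n"
  shows "up_down_poly_value n l s 0 > 0"
  unfolding up_down_poly_value_def using assms by (intro prod_pos) auto

definition adjacency_poly_value :: "nat \<Rightarrow> nat \<Rightarrow> nat \<Rightarrow> nat \<Rightarrow> real" where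
  "adjacency_poly_value n l k i = (\<Sum>j\<le>k. inversion_coeff (l - k) k j * up_down_poly_value n l (k - j) i)"

lemma poly_adjacency_poly:
  assumes "k \<le> l"
  shows "poly (adjacency_poly n l k) (up_down_eigenvalue n l i) = adjacency_poly_value n l k i"
  unfolding adjacency_poly_def adjacency_poly_value_def poly_sum
  by (intro sum.cong refl) (use assms in \<open>simp add: poly_up_down_poly\<close>)

section \<open>The eigenvalue of the walk on the first eigenspace\<close>

definition centered_indicator :: "nat \<Rightarrow> nat \<Rightarrow> nat \<Rightarrow> nat set \<Rightarrow> real" where
  "centered_indicator n l x S = (if x \<in> S then 1 else 0) - real l / real n"

lemma sum_indicator_insert:
  assumes x: "x < n" and B: "B \<subseteq> {..<n}" "card B = l - 1" and fB: "finite B" and l: "l \<ge> 1" "l \<le> n"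
  shows "(\<Sum>z\<in>{..<n} - B. (if x \<in> insert z B then 1 else 0 :: real)) = (if x \<in> B then real n - real l + 1 else 1)"
proof (cases "x \<in> B")
  case True
  then have "(\<Sum>z\<in>{..<n} - B. (if x \<in> insert z B then 1 else 0 :: real)) = real (card ({..<n} - B))" by simp
  also have "card ({..<n} - B) = n - (l - 1)" using B fB by (simp add: card_Diff_subset)
  finally show ?thesis using True l by (simp add: of_nat_diff)
next
  case False
  have "(\<Sum>z\<in>{..<n} - B. (if x \<in> insert z B then 1 else 0 :: real)) = (\<Sum>z\<in>{..<n} - B. if z = x then 1 else 0)"
    by (intro sum.cong refl) (use False in auto)
  also have "\<dots> = 1" using x False by (simp add: sum.delta')
  finally show ?thesis using False by simp
qed

lemma sum_if_mem_Diff_singleton: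
  fixes a b :: real
  assumes "finite S"
  shows "(\<Sum>y\<in>S. if x \<in> S - {y} then a else b) = (if x \<in> S then (real (card S) - 1) * a + b else real (card S) * b)"
proof (cases "x \<in> S")
  case True
  have "(\<Sum>y\<in>S. if x \<in> S - {y} then a else b) = b + (\<Sum>y\<in>S - {x}. if x \<in> S - {y} then a else b)"
    using True assms by (simp add: sum.remove)
  also have "(\<Sum>y\<in>S - {x}. if x \<in> S - {y} then a else b) = (\<Sum>y\<in>S - {x}. a)"
    by (intro sum.cong refl) (use True in auto)
  moreover have "card S \<ge> 1" using True assms by (auto simp: Suc_le_eq card_gt_0_iff)
  ultimately show ?thesis using True assms by (simp add: of_nat_diff)
qed (simp)

lemma up_down_centered_indicator:
  assumes S: "S \<in> johnson_vertices n l" and x: "x < n" and l: "l \<ge> 1" "l < n"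
  shows "up_down n (centered_indicator n l x) S = up_down_eigenvalue n l 1 * centered_indicator n l x S"
proof -
  have Sn: "S \<subseteq> {..<n}" and cS: "card S = l" using S unfolding johnson_vertices_def by auto
  have fS: "finite S" using Sn finite_subset by blast
  let ?c = "real l / real n"
  have inner: "(\<Sum>z\<in>{..<n} - (S - {y}). centered_indicator n l x (insert z (S - {y})))
      = (if x \<in> S - {y} then real n - real l + 1 else 1) - ?c * (real n - real l + 1)" if y: "y \<in> S" for y
  proof -
    have B: "S - {y} \<subseteq> {..<n}" "card (S - {y}) = l - 1" "finite (S - {y})" using Sn y fS cS by auto
    have cc: "card ({..<n} - (S - {y})) = n - (l - 1)" using B by (simp add: card_Diff_subset)
    have "(\<Sum>z\<in>{..<n} - (S - {y}). centered_indicator n l x (insert z (S - {y})))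
        = (\<Sum>z\<in>{..<n} - (S - {y}). (if x \<in> insert z (S - {y}) then 1 else 0 :: real)) - ?c * real (card ({..<n} - (S - {y})))"
      unfolding centered_indicator_def by (simp add: sum_subtractf)
    also have "real (card ({..<n} - (S - {y}))) = real n - real l + 1" using cc l by (simp add: of_nat_diff)
    finally show ?thesis using sum_indicator_insert[OF x B(1,2,3) l(1)] l by simp
  qed
  have "up_down n (centered_indicator n l x) S = (\<Sum>y\<in>S. (if x \<in> S - {y} then real n - real l + 1 else 1) - ?c * (real n - real l + 1))"
    unfolding up_down_expand by (intro sum.cong refl) (simp add: inner)
  also have "\<dots> = (\<Sum>y\<in>S. (if x \<in> S - {y} then real n - real l + 1 else 1)) - real l * ?c * (real n - real l + 1)"
    by (simp add: sum_subtractf cS)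
  also have "(\<Sum>y\<in>S. (if x \<in> S - {y} then real n - real l + 1 else 1))
       = (if x \<in> S then (real l - 1) * (real n - real l + 1) + 1 else real l)"
    using sum_if_mem_Diff_singleton[OF fS, of x "real n - real l + 1" 1] cS l by (simp add: of_nat_diff)
  finally have e: "up_down n (centered_indicator n l x) S = (if x \<in> S then (real l - 1) * (real n - real l + 1) + 1 else real l) - real l * ?c * (real n - real l + 1)" .
  have n0: "real n \<noteq> 0" using l by simp
  show ?thesis
  proof (cases "x \<in> S")
    case True
    then show ?thesis unfolding e centered_indicator_def up_down_eigenvalue_def using n0 by (simp add: field_simps)
  next
    case False
    then show ?thesis unfolding e centered_indicator_def up_down_eigenvalue_def using n0 by (simp add: field_simps)
  qed
qed

lemma sum_indicator: "(\<Sum>x<(n::nat). (if P x then 1 else 0 :: real)) = real (card {x\<in>{..<n}. P x})"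
proof -
  have "(\<Sum>x<n. (if P x then 1 else 0 :: real)) = (\<Sum>x\<in>{x\<in>{..<n}. P x}. 1)"
    by (rule sum.inter_filter[symmetric]) simp
  then show ?thesis by simp
qed

lemma sum_centered_indicator_mult:
  assumes S: "S \<in> johnson_vertices n l" and V: "V \<in> johnson_vertices n l" and n: "n > 0"
  shows "(\<Sum>x<n. centered_indicator n l x S * centered_indicator n l x V) = real (card (S \<inter> V)) - real l ^ 2 / real n"
proof -
  have Sn: "S \<subseteq> {..<n}" and cS: "card S = l" using S unfolding johnson_vertices_def by auto
  have Vn: "V \<subseteq> {..<n}" and cV: "card V = l" using V unfolding johnson_vertices_def by auto
  let ?c = "real l / real n"
  have "(\<Sum>x<n. centered_indicator n l x S * centered_indicator n l x V) = (\<Sum>x<n. (if x \<in> S \<and> x \<in> V then 1 else 0) - ?c * (if x \<in> S then 1 else 0) - ?c * (if x \<in> V then 1 else 0) + ?c * ?c)"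
    unfolding centered_indicator_def by (intro sum.cong refl) (auto simp: algebra_simps)
  also have "\<dots> = (\<Sum>x<n. (if x \<in> S \<and> x \<in> V then 1 else 0)) - ?c * (\<Sum>x<n. (if x \<in> S then 1 else 0)) - ?c * (\<Sum>x<n. (if x \<in> V then 1 else 0)) + real n * (?c * ?c)"
    by (simp add: sum.distrib sum_subtractf sum_distrib_left)
  also have "(\<Sum>x<n. (if x \<in> S \<and> x \<in> V then 1 else 0 :: real)) = real (card (S \<inter> V))"
  proof -
    have "{x\<in>{..<n}. x \<in> S \<and> x \<in> V} = S \<inter> V" using Sn by auto
    then show ?thesis by (simp add: sum_indicator)
  qed
  also have "(\<Sum>x<n. (if x \<in> S then 1 else 0 :: real)) = real l"
  proof -
    have "{x\<in>{..<n}. x \<in> S} = S" using Sn by auto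
    then show ?thesis using cS by (simp add: sum_indicator)
  qed
  also have "(\<Sum>x<n. (if x \<in> V then 1 else 0 :: real)) = real l"
  proof -
    have "{x\<in>{..<n}. x \<in> V} = V" using Vn by auto
    then show ?thesis using cV by (simp add: sum_indicator)
  qed
  finally have X: "(\<Sum>x<n. centered_indicator n l x S * centered_indicator n l x V) = real (card (S \<inter> V)) - ?c * real l - ?c * real l + real n * (?c * ?c)" .
  have a: "?c * real l = real l ^ 2 / real n" by (simp add: power2_eq_square)
  have b: "real n * (?c * ?c) = real l ^ 2 / real n" using n by (simp add: power2_eq_square field_simps)
  show ?thesis unfolding X a b by simp
qed

text \<open>
  The centered indicators are eigenvectors of the walk, so its eigenvalue on them can be read off
  by evaluating the sum over S and x of G_x(S) (A G_x)(S) in two ways: via the eigenvalue, and via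
  the combinatorial description of A, using that the sum over x of G_x(S) G_x(V) only depends
  on the size of S \<inter> V.
\<close>
lemma adjacency_poly_at_eigenvalue_1:
  assumes l: "l \<ge> 1" "l < n" and kl: "k \<le> l"
  shows "poly (adjacency_poly n l k) (up_down_eigenvalue n l 1) * (real l - real l ^ 2 / real n)
       = poly (adjacency_poly n l k) (up_down_eigenvalue n l 0) * (real (l - k) - real l ^ 2 / real n)"
proof -
  let ?V = "johnson_vertices n l"
  let ?A = "\<lambda>S. {V\<in>?V. card (S \<inter> V) = l - k}"
  let ?G = "centered_indicator n l"
  let ?lam = "poly (adjacency_poly n l k) (up_down_eigenvalue n l 1)"
  let ?N = "poly (adjacency_poly n l k) (up_down_eigenvalue n l 0)"
  let ?form = "\<Sum>S\<in>?V. \<Sum>x<n. ?G x S * poly_op (up_down n) (adjacency_poly n l k) (?G x) S"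
  have n: "n > 0" using l by simp
  have eig: "poly_op (up_down n) (adjacency_poly n l k) (?G x) S = ?lam * ?G x S" if "S \<in> ?V" "x < n" for S x
    using poly_op_eigenvector[OF linear_up_down local_up_down, of n l "?G x"]
      up_down_centered_indicator[OF _ that(2) l] that(1) by blast
  have "?form = (\<Sum>S\<in>?V. ?lam * (\<Sum>x<n. ?G x S * ?G x S))"
    by (intro sum.cong refl) (simp add: eig sum_distrib_left mult_ac)
  also have "\<dots> = real (card ?V) * (?lam * (real l - real l ^ 2 / real n))"
    by (simp add: sum_centered_indicator_mult[OF _ _ n] johnson_vertices_def)
  finally have w1: "?form = real (card ?V) * (?lam * (real l - real l ^ 2 / real n))" .
  have "?form = (\<Sum>S\<in>?V. \<Sum>x<n. ?G x S * (\<Sum>V\<in>?A S. ?G x V))"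
    by (intro sum.cong refl) (simp add: sum_intersection_level_eq_poly_op[OF _ kl])
  also have "\<dots> = (\<Sum>S\<in>?V. \<Sum>V\<in>?A S. \<Sum>x<n. ?G x S * ?G x V)"
    by (intro sum.cong refl) (simp add: sum_distrib_left sum.swap[of _ "{..<n}"])
  also have "\<dots> = (\<Sum>S\<in>?V. \<Sum>V\<in>?A S. real (l - k) - real l ^ 2 / real n)"
    by (intro sum.cong refl) (simp add: sum_centered_indicator_mult[OF _ _ n])
  also have "\<dots> = real (card ?V) * (?N * (real (l - k) - real l ^ 2 / real n))"
    by (simp add: card_intersection_level[OF _ kl l(1)])
  finally have w2: "?form = real (card ?V) * (?N * (real (l - k) - real l ^ 2 / real n))" .
  have "card ?V \<noteq> 0" unfolding card_johnson_vertices using l by simp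
  then show ?thesis using w1 w2 by simp
qed

section \<open>Asymptotics of the eigenvalues as n tends to infinity\<close>

lemma tendsto_ratio_1: "((\<lambda>n. (real n + c) / real n) \<longlongrightarrow> 1) sequentially"
proof -
  have "((\<lambda>n. 1 + c * inverse (real n)) \<longlongrightarrow> 1 + c * 0) sequentially"
    by (intro tendsto_intros lim_inverse_n)
  moreover have "eventually (\<lambda>n. 1 + c * inverse (real n) = (real n + c) / real n) sequentially"
    using eventually_gt_at_top[of 0] by eventually_elim (simp add: field_simps)
  ultimately show ?thesis by (simp add: Lim_transform_eventually)
qed

lemma tendsto_inverse_power: "((\<lambda>n. 1 / real n ^ j) \<longlongrightarrow> (if j = 0 then 1 else 0)) sequentially"
proof (cases "j = 0")
  case True then show ?thesis by simp
next
  case False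
  have "((\<lambda>n. inverse (real n) ^ j) \<longlongrightarrow> 0 ^ j) sequentially"
    by (intro tendsto_intros lim_inverse_n)
  moreover have "(0::real) ^ j = 0" using False by simp
  ultimately show ?thesis using False by (simp add: divide_inverse power_inverse)
qed

lemma tendsto_up_down_poly_value:
  "((\<lambda>n. up_down_poly_value n l s i / real n ^ s) \<longlongrightarrow> falling (real l - real i) s) sequentially"
proof -
  have e: "up_down_poly_value n l s i / real n ^ s = (\<Prod>t<s. (real l - real i - real t) * ((real n + (real t - real l - real i + 1)) / real n))" for n
  proof -
    have "(\<Prod>t<s. (real l - real i - real t) * ((real n + (real t - real l - real i + 1)) / real n))
        = (\<Prod>t<s. ((real l - real i - real t) * (real n - real l + real t - real i + 1)) / real n)"
      by (intro prod.cong refl) (simp add: algebra_simps)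
    also have "\<dots> = up_down_poly_value n l s i / (\<Prod>t<s. real n)" unfolding up_down_poly_value_def by (rule prod_dividef)
    finally show ?thesis by simp
  qed
  have "((\<lambda>n. \<Prod>t<s. (real l - real i - real t) * ((real n + (real t - real l - real i + 1)) / real n))
        \<longlongrightarrow> (\<Prod>t<s. (real l - real i - real t) * 1)) sequentially"
    by (intro tendsto_prod tendsto_mult tendsto_const tendsto_ratio_1)
  then show ?thesis unfolding e falling_def by (simp add: algebra_simps)
qed

lemma inversion_coeff_0: "inversion_coeff m k 0 = 1 / (fact k)\<^sup>2"
  by (simp add: inversion_coeff_def)

lemma tendsto_adjacency_poly_value:
  "((\<lambda>n. adjacency_poly_value n l k i / real n ^ k) \<longlongrightarrow> inversion_coeff (l - k) k 0 * falling (real l - real i) k) sequentially"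
proof -
  have e: "eventually (\<lambda>n. (\<Sum>j\<le>k. inversion_coeff (l - k) k j * (up_down_poly_value n l (k - j) i / real n ^ (k - j)) * (1 / real n ^ j)) = adjacency_poly_value n l k i / real n ^ k) sequentially"
    using eventually_gt_at_top[of 0]
  proof eventually_elim
    case (elim n)
    have "(\<Sum>j\<le>k. inversion_coeff (l - k) k j * (up_down_poly_value n l (k - j) i / real n ^ (k - j)) * (1 / real n ^ j))
        = (\<Sum>j\<le>k. inversion_coeff (l - k) k j * up_down_poly_value n l (k - j) i / real n ^ k)"
    proof (intro sum.cong refl)
      fix j assume "j \<in> {..k}"
      then have "real n ^ k = real n ^ (k - j) * real n ^ j" by (simp add: power_add[symmetric])
      then show "inversion_coeff (l - k) k j * (up_down_poly_value n l (k - j) i / real n ^ (k - j)) * (1 / real n ^ j) = inversion_coeff (l - k) k j * up_down_poly_value n l (k - j) i / real n ^ k"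
        using elim by simp
    qed
    also have "\<dots> = adjacency_poly_value n l k i / real n ^ k" unfolding adjacency_poly_value_def by (simp add: sum_divide_distrib)
    finally show ?case .
  qed
  have "((\<lambda>n. \<Sum>j\<le>k. inversion_coeff (l - k) k j * (up_down_poly_value n l (k - j) i / real n ^ (k - j)) * (1 / real n ^ j))
      \<longlongrightarrow> (\<Sum>j\<le>k. inversion_coeff (l - k) k j * falling (real l - real i) (k - j) * (if j = 0 then 1 else 0))) sequentially"
    by (intro tendsto_sum tendsto_mult tendsto_const tendsto_up_down_poly_value tendsto_inverse_power)
  also have "(\<Sum>j\<le>k. inversion_coeff (l - k) k j * falling (real l - real i) (k - j) * (if j = 0 then 1 else 0)) = inversion_coeff (l - k) k 0 * falling (real l - real i) k"
    by (simp add: sum.delta' if_distrib cong: if_cong)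
  finally show ?thesis using e by (simp add: Lim_transform_eventually)
qed

lemma tendsto_adjacency_ratio:
  assumes "k \<le> l"
  shows "((\<lambda>n. adjacency_poly_value n l k i / adjacency_poly_value n l k 0) \<longlongrightarrow> falling (real l - real i) k / falling (real l) k) sequentially"
proof -
  have ne: "inversion_coeff (l - k) k 0 * falling (real l - real 0) k \<noteq> 0" using falling_pos[OF assms] by (simp add: inversion_coeff_0)
  have "((\<lambda>n. (adjacency_poly_value n l k i / real n ^ k) / (adjacency_poly_value n l k 0 / real n ^ k)) \<longlongrightarrow>
      (inversion_coeff (l - k) k 0 * falling (real l - real i) k) / (inversion_coeff (l - k) k 0 * falling (real l - real 0) k)) sequentially"
    by (rule tendsto_divide[OF tendsto_adjacency_poly_value tendsto_adjacency_poly_value ne])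
  moreover have "eventually (\<lambda>n. (adjacency_poly_value n l k i / real n ^ k) / (adjacency_poly_value n l k 0 / real n ^ k) = adjacency_poly_value n l k i / adjacency_poly_value n l k 0) sequentially"
    using eventually_gt_at_top[of 0] by eventually_elim simp
  ultimately show ?thesis using ne by (simp add: Lim_transform_eventually inversion_coeff_0)
qed

lemma tendsto_up_down_ratio:
  assumes "s \<le> l"
  shows "((\<lambda>n. up_down_poly_value n l s i / up_down_poly_value n l s 0) \<longlongrightarrow> falling (real l - real i) s / falling (real l) s) sequentially"
proof -
  have ne: "falling (real l - real 0) s \<noteq> 0" using falling_pos[OF assms] by simp
  have "((\<lambda>n. (up_down_poly_value n l s i / real n ^ s) / (up_down_poly_value n l s 0 / real n ^ s)) \<longlongrightarrow>
      falling (real l - real i) s / falling (real l - real 0) s) sequentially"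
    by (rule tendsto_divide[OF tendsto_up_down_poly_value tendsto_up_down_poly_value ne])
  moreover have "eventually (\<lambda>n. (up_down_poly_value n l s i / real n ^ s) / (up_down_poly_value n l s 0 / real n ^ s) = up_down_poly_value n l s i / up_down_poly_value n l s 0) sequentially"
    using eventually_gt_at_top[of 0] by eventually_elim simp
  ultimately show ?thesis by (simp add: Lim_transform_eventually)
qed

lemma eventually_adjacency_poly_value_pos:
  assumes "k \<le> l"
  shows "eventually (\<lambda>n. adjacency_poly_value n l k 0 > 0) sequentially"
proof -
  have pos: "inversion_coeff (l - k) k 0 * falling (real l - real 0) k > 0" using falling_pos[OF assms] by (simp add: inversion_coeff_0)
  have "eventually (\<lambda>n. adjacency_poly_value n l k 0 / real n ^ k > 0) sequentially"
    by (rule order_tendstoD(1)[OF tendsto_adjacency_poly_value pos])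
  then show ?thesis
    by (rule eventually_mono) (simp add: zero_less_divide_iff)
qed

definition gap_limit :: "nat \<Rightarrow> nat \<Rightarrow> real \<Rightarrow> nat \<Rightarrow> nat \<Rightarrow> real" where
  "gap_limit l k \<alpha> r i = 1 - falling (real l - real i) k / falling (real l) k - (1 - (1 - \<alpha>) ^ (r + 1))
     + (1 - (1 - \<alpha>) ^ (r + 1)) * (8 ^ r * real (l choose r)) * (\<Sum>j\<le>r. falling (real l - real i) (l - j) / falling (real l) (l - j))"

lemma falling_ratio_sum_ge:
  assumes "1 \<le> i" "i \<le> r" "2 * r \<le> l"
  shows "1 \<le> 8 ^ r * real (l choose r) * (\<Sum>j\<le>r. falling (real l - real i) (l - j) / falling (real l) (l - j))"
proof -
  let ?t = "\<lambda>j. falling (real l - real i) (l - j) / falling (real l) (l - j)"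
  have c0: "real (l choose i) > 0" using assms by simp
  have "1 / real (l choose i) = ?t i"
    using falling_ratio_binomial assms by simp
  also have "\<dots> \<le> (\<Sum>j\<le>r. ?t j)"
    by (rule member_le_sum) (use assms falling_ratio_nonneg in auto)
  finally have "1 \<le> real (l choose i) * (\<Sum>j\<le>r. ?t j)" using c0 by (simp add: field_simps)
  also have "\<dots> \<le> 8 ^ r * real (l choose r) * (\<Sum>j\<le>r. ?t j)"
  proof (rule mult_right_mono)
    have "l choose i \<le> l choose r" by (rule binomial_mono) (use assms in auto)
    then show "real (l choose i) \<le> 8 ^ r * real (l choose r)"
      using mult_mono[of 1 "8 ^ r" "real (l choose i)" "real (l choose r)"] by simp
    show "0 \<le> (\<Sum>j\<le>r. ?t j)" by (intro sum_nonneg) (use assms falling_ratio_nonneg in auto)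
  qed
  finally show ?thesis .
qed

lemma gap_limit_pos:
  assumes k: "1 \<le> k" "2 * k < l" and a: "\<alpha> * real l = real k" and r: "2 * r \<le> l"
    and i: "1 \<le> i" "i \<le> l" and ri: "\<not> (r = 0 \<and> i = 1)"
  shows "gap_limit l k \<alpha> r i > 0"
proof -
  define q where "q = (real l - real k) / real l"
  define \<Lambda> where "\<Lambda> = falling (real l - real i) k / falling (real l) k"
  define \<Sigma> where "\<Sigma> = (\<Sum>j\<le>r. falling (real l - real i) (l - j) / falling (real l) (l - j))"
  define \<beta> where "\<beta> = 1 - q ^ (r + 1)"
  define K where "K = 8 ^ r * real (l choose r)"
  have qa: "1 - \<alpha> = q" unfolding q_def using a k by (simp add: field_simps)
  have q01: "0 < q" "q < 1" unfolding q_def using k by auto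
  have \<Lambda>eq: "\<Lambda> = falling (real l - real k) i / falling (real l) i"
    unfolding \<Lambda>_def by (rule falling_ratio_swap) (use i k in auto)
  have \<Lambda>le: "\<Lambda> \<le> q ^ i" unfolding \<Lambda>eq q_def by (rule falling_ratio_bound(1)) (use k i in auto)
  have \<Sigma>nn: "\<Sigma> \<ge> 0" unfolding \<Sigma>_def by (intro sum_nonneg) (use i falling_ratio_nonneg in auto)
  have "0 < q ^ Suc r" "q ^ Suc r < 1" using q01 power_Suc_less_one[OF q01] by auto
  then have \<beta>: "0 < \<beta>" "\<beta> < 1" unfolding \<beta>_def by auto
  have lv: "gap_limit l k \<alpha> r i = 1 - \<Lambda> - \<beta> + \<beta> * K * \<Sigma>"
    unfolding gap_limit_def \<Lambda>_def \<beta>_def K_def \<Sigma>_def qa ..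
  show ?thesis
  proof (cases "i \<le> r")
    case True
    have "1 \<le> K * \<Sigma>" using falling_ratio_sum_ge[OF i(1) True r] unfolding K_def \<Sigma>_def .
    then have "\<beta> \<le> \<beta> * (K * \<Sigma>)" using \<beta> by simp
    moreover have "q ^ i < 1" using q01 i by (simp add: power_less_one_iff)
    ultimately show ?thesis unfolding lv using \<Lambda>le by (simp add: mult.assoc)
  next
    case False
    then have i2: "2 \<le> i" using ri i by auto
    have "\<Lambda> < q ^ i" unfolding \<Lambda>eq q_def by (rule falling_ratio_bound(2)) (use k i i2 in auto)
    moreover have "q ^ i \<le> q ^ (r + 1)" by (rule power_decreasing) (use False q01 in auto)
    moreover have "0 \<le> \<beta> * K * \<Sigma>" using \<beta> \<Sigma>nn unfolding K_def by simp
    ultimately show ?thesis unfolding lv \<beta>_def by linarith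
  qed
qed

definition gap_value :: "nat \<Rightarrow> nat \<Rightarrow> nat \<Rightarrow> real \<Rightarrow> nat \<Rightarrow> nat \<Rightarrow> real" where
  "gap_value n l k \<alpha> r i = 1 - adjacency_poly_value n l k i / adjacency_poly_value n l k 0 - (1 - (1 - \<alpha>) ^ (r + 1))
     + (1 - (1 - \<alpha>) ^ (r + 1)) * (8 ^ r * real (l choose r)) * (\<Sum>j\<le>r. up_down_poly_value n l (l - j) i / up_down_poly_value n l (l - j) 0)"

lemma tendsto_gap_value:
  assumes "k \<le> l" "r \<le> l"
  shows "((\<lambda>n. gap_value n l k \<alpha> r i) \<longlongrightarrow> gap_limit l k \<alpha> r i) sequentially"
  unfolding gap_value_def gap_limit_def
  using assms by (intro tendsto_intros tendsto_adjacency_ratio tendsto_up_down_ratio) auto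

lemma eventually_gap_value_pos:
  assumes k: "1 \<le> k" "2 * k < l" and a: "\<alpha> * real l = real k" and r: "2 * r \<le> l"
    and i: "1 \<le> i" "i \<le> l" and ri: "\<not> (r = 0 \<and> i = 1)"
  shows "eventually (\<lambda>n. gap_value n l k \<alpha> r i > 0) sequentially"
  by (rule order_tendstoD(1)[OF tendsto_gap_value gap_limit_pos[OF assms]]) (use k r in auto)

section \<open>The sum-of-squares certificate\<close>

definition gap_poly :: "nat \<Rightarrow> nat \<Rightarrow> nat \<Rightarrow> real \<Rightarrow> nat \<Rightarrow> real poly" where
  "gap_poly n l k \<alpha> r =
     [:1:] - smult (1 / adjacency_poly_value n l k 0) (adjacency_poly n l k) - [:1 - (1 - \<alpha>) ^ (r + 1):]
     + smult ((1 - (1 - \<alpha>) ^ (r + 1)) * (8 ^ r * real (l choose r)) * real (n choose l))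
         (\<Sum>j = 0..r. smult (delta_scale n l j) (up_down_poly n l (l - j)))"

lemma pi_inner_johnson_laplacian:
  assumes l1: "1 \<le> l" and kl: "k \<le> l" and ak: "\<alpha> * real l = real k"
  shows "pi_inner n l F (johnson_laplacian n l \<alpha> F)
    = (\<Sum>S\<in>johnson_vertices n l. F S * F S
        - F S * poly_op (up_down n) (adjacency_poly n l k) F S / adjacency_poly_value n l k 0) / real (n choose l)"
  unfolding pi_inner_def pi_expect_def card_johnson_vertices
  by (intro arg_cong2[where f = "(/)"] sum.cong refl)
    (simp add: johnson_laplacian_def johnson_walk_eq_poly_op[OF _ ak kl l1] poly_adjacency_poly[OF kl]
      algebra_simps)

lemma laplacian_form_minus_bound_eq_gap_poly:
  fixes F :: "nat set \<Rightarrow> real"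
  assumes l1: "1 \<le> l" and kl: "k \<le> l" and ak: "\<alpha> * real l = real k" and rl: "r \<le> l" and ln: "l \<le> n"
  shows "pi_inner n l F (johnson_laplacian n l \<alpha> F)
      - (1 - (1 - \<alpha>) ^ (r + 1)) *
          (pi_expect n l F
           - 8 ^ r * real (l choose r) * (\<Sum>j = 0..r. subset_avg n j (\<lambda>Y. (johnson_delta n l Y F)\<^sup>2))
           + pi_expect n l (\<lambda>X. (F X)\<^sup>2 - F X))
    = (\<Sum>S\<in>johnson_vertices n l. F S * poly_op (up_down n) (gap_poly n l k \<alpha> r) F S) / real (n choose l)"
proof -
  let ?V = "johnson_vertices n l"
  let ?A = "\<lambda>S. poly_op (up_down n) (adjacency_poly n l k) F S"
  let ?B = "\<lambda>j S. poly_op (up_down n) (up_down_poly n l (l - j)) F S"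
  define cV where "cV = real (n choose l)"
  define \<beta> where "\<beta> = 1 - (1 - \<alpha>) ^ (r + 1)"
  define K where "K = 8 ^ r * real (l choose r)"
  define N0 where "N0 = adjacency_poly_value n l k 0"
  define sF where "sF = (\<Sum>S\<in>?V. F S)"
  define sF2 where "sF2 = (\<Sum>S\<in>?V. F S * F S)"
  define sA where "sA = (\<Sum>S\<in>?V. F S * ?A S)"
  define sB where "sB = (\<lambda>j. \<Sum>S\<in>?V. F S * ?B j S)"
  have cV0: "cV > 0" unfolding cV_def using ln by simp
  have cVV: "real (card ?V) = cV" unfolding cV_def card_johnson_vertices ..
  have L: "pi_inner n l F (johnson_laplacian n l \<alpha> F) = (sF2 - sA / N0) / cV"
    unfolding pi_inner_johnson_laplacian[OF l1 kl ak] sF2_def sA_def N0_def cV_def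
    by (simp add: sum_subtractf sum_divide_distrib)
  have deltas: "(\<Sum>j = 0..r. subset_avg n j (\<lambda>Y. (johnson_delta n l Y F)\<^sup>2)) = (\<Sum>j = 0..r. delta_scale n l j * sB j)"
    unfolding sB_def by (intro sum.cong refl) (use rl ln in \<open>simp add: subset_avg_delta_sq_eq\<close>)
  have sq: "pi_expect n l (\<lambda>X. (F X)\<^sup>2 - F X) = (sF2 - sF) / cV"
    unfolding pi_expect_def cVV sF2_def sF_def by (simp add: sum_subtractf power2_eq_square)
  have "(\<Sum>S\<in>?V. F S * poly_op (up_down n) (gap_poly n l k \<alpha> r) F S)
      = (\<Sum>S\<in>?V. F S * F S - F S * ?A S / N0 - \<beta> * (F S * F S)
            + \<beta> * K * cV * (\<Sum>j = 0..r. delta_scale n l j * (F S * ?B j S)))"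
    unfolding gap_poly_def poly_op_add[OF linear_up_down] poly_op_diff[OF linear_up_down]
      poly_op_smult[OF linear_up_down] poly_op_const[OF linear_up_down]
      poly_op_sum[OF linear_up_down finite_atLeastAtMost]
    by (intro sum.cong refl) (simp add: N0_def \<beta>_def K_def cV_def algebra_simps sum_distrib_left)
  also have "\<dots> = sF2 - sA / N0 - \<beta> * sF2
      + \<beta> * K * cV * (\<Sum>S\<in>?V. \<Sum>j = 0..r. delta_scale n l j * (F S * ?B j S))"
    unfolding sF2_def sA_def by (simp add: sum.distrib sum_subtractf sum_distrib_left sum_divide_distrib)
  also have "(\<Sum>S\<in>?V. \<Sum>j = 0..r. delta_scale n l j * (F S * ?B j S)) = (\<Sum>j = 0..r. delta_scale n l j * sB j)"
    unfolding sB_def by (subst sum.swap) (simp add: sum_distrib_left)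
  finally have T: "(\<Sum>S\<in>?V. F S * poly_op (up_down n) (gap_poly n l k \<alpha> r) F S)
      = sF2 - sA / N0 - \<beta> * sF2 + \<beta> * K * cV * (\<Sum>j = 0..r. delta_scale n l j * sB j)" .
  have E: "pi_expect n l F = sF / cV" unfolding pi_expect_def cVV sF_def ..
  show ?thesis
    unfolding L deltas sq T E \<beta>_def[symmetric] K_def[symmetric] cV_def[symmetric]
    using cV0 by (simp add: field_simps)
qed

lemma poly_gap_poly:
  assumes rl: "r \<le> l" and ln: "l \<le> n" and l1: "1 \<le> l" and kl: "k \<le> l"
  shows "poly (gap_poly n l k \<alpha> r) (up_down_eigenvalue n l i) = gap_value n l k \<alpha> r i"
proof -
  have "real (n choose l) * delta_scale n l j = 1 / up_down_poly_value n l (l - j) 0" if "j \<le> r" for j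
  proof -
    have "delta_scale n l j * real (n choose l) * poly (up_down_poly n l (l - j)) (up_down_eigenvalue n l 0) = 1"
      by (rule delta_scale_normalization) (use that rl ln l1 in auto)
    then have h: "real (n choose l) * delta_scale n l j * up_down_poly_value n l (l - j) 0 = 1"
      using poly_up_down_poly[of "l - j" l n 0] by (simp add: mult_ac)
    then have "up_down_poly_value n l (l - j) 0 \<noteq> 0" by auto
    with h show ?thesis by (simp add: eq_divide_eq)
  qed
  then have "(\<Sum>j = 0..r. real (n choose l) * delta_scale n l j * up_down_poly_value n l (l - j) i)
      = (\<Sum>j\<le>r. up_down_poly_value n l (l - j) i / up_down_poly_value n l (l - j) 0)"
    by (simp add: atLeast0AtMost)
  moreover have "poly (gap_poly n l k \<alpha> r) (up_down_eigenvalue n l i)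
      = 1 - adjacency_poly_value n l k i / adjacency_poly_value n l k 0 - (1 - (1 - \<alpha>) ^ (r + 1))
        + (1 - (1 - \<alpha>) ^ (r + 1)) * (8 ^ r * real (l choose r))
          * (\<Sum>j = 0..r. real (n choose l) * delta_scale n l j * up_down_poly_value n l (l - j) i)"
    unfolding gap_poly_def using rl
    by (simp add: poly_sum poly_adjacency_poly[OF kl] poly_up_down_poly sum_distrib_left mult_ac)
  ultimately show ?thesis unfolding gap_value_def by simp
qed

lemma gap_value_0_nonneg:
  assumes l1: "1 \<le> l" and kl: "k \<le> l" and ak: "\<alpha> * real l = real k" and rl: "r \<le> l" and ln: "l \<le> n"
    and N0: "adjacency_poly_value n l k 0 \<noteq> 0"
  shows "gap_value n l k \<alpha> r 0 \<ge> 0"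
proof -
  define \<beta> where "\<beta> = 1 - (1 - \<alpha>) ^ (r + 1)"
  define K where "K = 8 ^ r * real (l choose r)"
  have al: "\<alpha> = real k / real l" using ak l1 by (simp add: field_simps)
  have "(1 - \<alpha>) ^ (r + 1) \<le> 1" by (rule power_le_one) (use kl l1 in \<open>auto simp: al divide_le_eq\<close>)
  then have \<beta>0: "\<beta> \<ge> 0" unfolding \<beta>_def by simp
  have "(1::real) \<le> real (l choose r)" using rl by (simp add: Suc_le_eq)
  then have K1: "K \<ge> 1" unfolding K_def using mult_mono[of 1 "8 ^ r" 1 "real (l choose r)"] by simp
  have "up_down_poly_value n l (l - j) 0 \<noteq> 0" for j
    using up_down_poly_value_0_pos[OF diff_le_self ln, of j] by linarith
  then have "gap_value n l k \<alpha> r 0 = \<beta> * (K * real r + (K - 1))"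
    unfolding gap_value_def \<beta>_def K_def using N0 by (simp add: algebra_simps)
  also have "\<dots> \<ge> 0" using \<beta>0 K1 by simp
  finally show ?thesis .
qed

text \<open>
  For r = 0 the limit of the gap at i = 1 is 0, so the exact eigenvalue of the walk on the first
  eigenspace is needed; it is at most 1 - \<alpha>.
\<close>
lemma gap_value_0_1_nonneg:
  assumes l1: "1 \<le> l" and kl: "k \<le> l" and ak: "\<alpha> * real l = real k" and ln: "l < n"
    and N0: "adjacency_poly_value n l k 0 > 0"
  shows "gap_value n l k \<alpha> 0 1 \<ge> 0"
proof -
  have al: "\<alpha> = real k / real l" using ak l1 by (simp add: field_simps)
  have D: "real l - real l ^ 2 / real n > 0"
    using ln l1 by (simp add: power2_eq_square field_simps)
  have "adjacency_poly_value n l k 1 * (real l - real l ^ 2 / real n)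
      = adjacency_poly_value n l k 0 * (real (l - k) - real l ^ 2 / real n)"
    using adjacency_poly_at_eigenvalue_1[OF l1 ln kl] poly_adjacency_poly[OF kl] by simp
  then have "adjacency_poly_value n l k 1 / adjacency_poly_value n l k 0
      = (real (l - k) - real l ^ 2 / real n) / (real l - real l ^ 2 / real n)"
    using D N0 by (simp add: field_simps)
  also have "\<dots> \<le> 1 - \<alpha>"
  proof -
    have "real (l - k) - real l ^ 2 / real n \<le> (1 - \<alpha>) * (real l - real l ^ 2 / real n)"
      unfolding al using kl l1 ln by (simp add: of_nat_diff field_simps power2_eq_square)
    then show ?thesis using D by (simp add: divide_le_eq)
  qed
  finally have "adjacency_poly_value n l k 1 / adjacency_poly_value n l k 0 \<le> 1 - \<alpha>" .
  moreover have "up_down_poly_value n l l 1 = 0"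
    unfolding up_down_poly_value_def
    by (rule prod_zero) (use l1 in \<open>auto intro!: bexI[of _ "l - 1"] simp: of_nat_diff\<close>)
  ultimately show ?thesis unfolding gap_value_def by simp
qed

lemma gap_value_nonneg:
  assumes l1: "1 \<le> l" and kl: "k \<le> l" and ak: "\<alpha> * real l = real k"
    and r: "2 * r \<le> l" and nl: "2 * l < n" and N0: "adjacency_poly_value n l k 0 > 0"
    and pos: "\<And>i. i \<in> {1..l} \<Longrightarrow> \<not> (r = 0 \<and> i = 1) \<Longrightarrow> gap_value n l k \<alpha> r i > 0"
    and il: "i \<le> l"
  shows "gap_value n l k \<alpha> r i \<ge> 0"
proof -
  consider "i = 0" | "r = 0 \<and> i = 1" | "i \<in> {1..l}" "\<not> (r = 0 \<and> i = 1)" using il by fastforce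
  then show ?thesis
  proof cases
    case 1
    then show ?thesis using gap_value_0_nonneg[OF l1 kl ak] r nl N0 by simp
  next
    case 2
    then show ?thesis using gap_value_0_1_nonneg[OF l1 kl ak _ N0] nl by simp
  next
    case 3
    then show ?thesis using pos[of i] by simp
  qed
qed

lemma johnson_sos_certificate:
  fixes l k n r :: nat and \<alpha> :: real
  assumes l1: "1 \<le> l" and kl: "k \<le> l" and ak: "\<alpha> * real l = real k"
    and r: "2 * r \<le> l" and nl: "2 * l < n" and N0: "adjacency_poly_value n l k 0 > 0"
    and pos: "\<And>i. i \<in> {1..l} \<Longrightarrow> \<not> (r = 0 \<and> i = 1) \<Longrightarrow> gap_value n l k \<alpha> r i > 0"
  shows "sos_deg2_proof (johnson_vertices n l)
    (\<lambda>F. pi_inner n l F (johnson_laplacian n l \<alpha> F))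
    (\<lambda>F. (1 - (1 - \<alpha>) ^ (r + 1)) *
          (pi_expect n l F
           - 8 ^ r * real (l choose r) * (\<Sum>j = 0..r. subset_avg n j (\<lambda>Y. (johnson_delta n l Y F)\<^sup>2))
           + pi_expect n l (\<lambda>X. (F X)\<^sup>2 - F X)))"
proof -
  let ?V = "johnson_vertices n l"
  let ?T = "up_down n"
  let ?L = "lagrange_basis (up_down_eigenvalue n l) {..l}"
  define e where "e i S X = poly_op ?T (?L i) (\<lambda>Y. if Y = X then 1 else 0) S" for i S X
  define w where "w i = gap_value n l k \<alpha> r i / real (n choose l)" for i
  have rl: "r \<le> l" and ln: "l \<le> n" using r nl by auto
  have weights: "w i \<ge> 0" if "i \<in> {..l}" for i
    using gap_value_nonneg[OF assms] that unfolding w_def by simp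
  have expand: "poly_op ?T (?L i) F S = (\<Sum>X\<in>?V. e i S X * F X)" if "S \<in> ?V" for i S F
    unfolding e_def by (subst poly_op_expand[OF linear_up_down local_up_down finite_johnson_vertices that])
      (simp add: mult.commute)
  have lagrange: "(\<Sum>S\<in>?V. F S * poly_op ?T (gap_poly n l k \<alpha> r) F S)
      = (\<Sum>i\<le>l. poly (gap_poly n l k \<alpha> r) (up_down_eigenvalue n l i) * (\<Sum>S\<in>?V. (poly_op ?T (?L i) F S)\<^sup>2))"
    for F
    by (rule quadratic_form_poly_op_lagrange[OF linear_up_down local_up_down self_adjoint_up_down[OF l1]
          finite_atMost inj_on_up_down_eigenvalue up_down_annihilated]) (use nl in auto)
  have "pi_inner n l F (johnson_laplacian n l \<alpha> F)
      - (1 - (1 - \<alpha>) ^ (r + 1)) *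
          (pi_expect n l F
           - 8 ^ r * real (l choose r) * (\<Sum>j = 0..r. subset_avg n j (\<lambda>Y. (johnson_delta n l Y F)\<^sup>2))
           + pi_expect n l (\<lambda>X. (F X)\<^sup>2 - F X))
    = (\<Sum>i\<le>l. w i * (\<Sum>S\<in>?V. (\<Sum>X\<in>?V. e i S X * F X)\<^sup>2))" for F
    unfolding laplacian_form_minus_bound_eq_gap_poly[OF l1 kl ak rl ln] lagrange w_def
    by (simp add: poly_gap_poly[OF rl ln l1 kl] expand sum_divide_distrib cong: sum.cong)
  then show ?thesis
    by (intro sos_deg2_proofI[OF finite_johnson_vertices finite_atMost weights]) simp
qed

lemma eventually_johnson_gap_conditions:
  assumes k: "1 \<le> k" "2 * k < l" and ak: "\<alpha> * real l = real k"
  shows "eventually (\<lambda>n. 2 * l < n \<and> adjacency_poly_value n l k 0 > 0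
    \<and> (\<forall>r i. 2 * r \<le> l \<longrightarrow> i \<in> {1..l} \<longrightarrow> \<not> (r = 0 \<and> i = 1) \<longrightarrow> gap_value n l k \<alpha> r i > 0))
    sequentially"
proof (intro eventually_conj eventually_gt_at_top eventually_adjacency_poly_value_pos)
  define A where "A = {(r, i). 2 * r \<le> l \<and> i \<in> {1..l} \<and> \<not> (r = 0 \<and> i = 1)}"
  have "finite A" unfolding A_def by (rule finite_subset[of _ "{..l} \<times> {..l}"]) auto
  moreover have "\<forall>p\<in>A. eventually (\<lambda>n. gap_value n l k \<alpha> (fst p) (snd p) > 0) sequentially"
    unfolding A_def using eventually_gap_value_pos[OF k ak] by auto
  ultimately have "eventually (\<lambda>n. \<forall>p\<in>A. gap_value n l k \<alpha> (fst p) (snd p) > 0) sequentially"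
    by (rule eventually_ball_finite)
  then show "eventually (\<lambda>n. \<forall>r i. 2 * r \<le> l \<longrightarrow> i \<in> {1..l} \<longrightarrow> \<not> (r = 0 \<and> i = 1)
      \<longrightarrow> gap_value n l k \<alpha> r i > 0) sequentially"
    by (rule eventually_mono) (auto simp: A_def)
qed (use k in simp)

lemma level_of_fraction:
  assumes "1 \<le> l" "0 < \<alpha>" "\<alpha> < 1/2" "\<alpha> * real l \<in> \<nat>"
  obtains k where "\<alpha> * real l = real k" "1 \<le> k" "2 * k < l"
proof -
  obtain k where ak: "\<alpha> * real l = real k" using assms(4) Nats_cases by metis
  have "0 < \<alpha> * real l" "2 * (\<alpha> * real l) < real l" using assms by simp_all
  with ak show ?thesis using that by simp
qed

theorem theorem5p4:
  fixes l :: nat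
  assumes "l \<ge> 1"
  shows "\<exists>c :: real. \<forall>\<alpha> :: real.
    (\<alpha> \<in> \<rat> \<and> 0 < \<alpha> \<and> \<alpha> < 1/2 \<and> \<alpha> * real l \<in> \<nat>) \<longrightarrow>
    (\<exists>N :: nat. \<forall>n \<ge> N. \<forall>r :: nat. 2 * r \<le> l \<longrightarrow>
      (let LHS = (\<lambda>F. pi_inner n l F (johnson_laplacian n l \<alpha> F));
           RHS = (\<lambda>F. (1 - (1 - \<alpha>) ^ (r + 1)) *
                   ((1 - c / real n) * pi_expect n l F
                    - 8 ^ r * real (l choose r) *
                        (\<Sum>j = 0..r. subset_avg n j (\<lambda>Y. (johnson_delta n l Y F)\<^sup>2))
                    + pi_expect n l (\<lambda>X. (F X)\<^sup>2 - F X)))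
       in sos_deg2_proof (johnson_vertices n l) LHS RHS
          \<and> (\<forall>F. (\<forall>X\<in>johnson_vertices n l. 0 \<le> F X \<and> F X \<le> 1) \<longrightarrow> LHS F \<ge> RHS F)))"
proof (intro exI[of _ "0::real"] allI impI, goal_cases)
  case (1 \<alpha>)
  then obtain k where ak: "\<alpha> * real l = real k" and k: "1 \<le> k" "2 * k < l"
    using level_of_fraction[OF assms] by blast
  obtain N where N: "\<And>n. N \<le> n \<Longrightarrow> 2 * l < n \<and> adjacency_poly_value n l k 0 > 0
      \<and> (\<forall>r i. 2 * r \<le> l \<longrightarrow> i \<in> {1..l} \<longrightarrow> \<not> (r = 0 \<and> i = 1) \<longrightarrow> gap_value n l k \<alpha> r i > 0)"
    using eventually_johnson_gap_conditions[OF k ak] unfolding eventually_sequentially by auto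
  have cert: "sos_deg2_proof (johnson_vertices n l)
    (\<lambda>F. pi_inner n l F (johnson_laplacian n l \<alpha> F))
    (\<lambda>F. (1 - (1 - \<alpha>) ^ (r + 1)) *
          (pi_expect n l F
           - 8 ^ r * real (l choose r) * (\<Sum>j = 0..r. subset_avg n j (\<lambda>Y. (johnson_delta n l Y F)\<^sup>2))
           + pi_expect n l (\<lambda>X. (F X)\<^sup>2 - F X)))" if "N \<le> n" "2 * r \<le> l" for n r
    using N[OF that(1)] that(2) k by (intro johnson_sos_certificate[OF assms _ ak]) auto
  show ?case
    unfolding Let_def
  proof (intro exI[of _ N] allI impI conjI, goal_cases)
    case (1 n r)
    show ?case using cert[OF 1] by (simp only: div_0 diff_zero mult_1_left)
  next
    case (2 n r F)
    show ?case
      using sos_deg2_proof_sound[OF cert[OF 2(1,2)] finite_johnson_vertices 2(3)]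
      by (simp only: div_0 diff_zero mult_1_left)
  qed
qed

end
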